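(* Let $\mathfrak X,\mathfrak Y$ be super operator systems. If $\varphi:\mathfrak X\to\mathfrak Y$ is a unital contractive (respectively completely contractive) $*$-linear map, then $\varphi$ is superpositive (respectively completely superpositive). If $\psi:\mathfrak X\to\mathfrak Y$ is a completely superpositive map, then $\psi$ is completely bounded with $\Vert\psi\Vert_{cb}\le 8\,\Vert\psi(\mathbf 1)\Vert$; if moreover $\psi$ is unital, then $\Vert\psi\Vert_{cb}\le 4$.
   Context: A $\mathbb Z_2$-graded Hilbert space is $\widehat{\mathcal H}=\mathcal H^{even}\oplus\mathcal H^{odd}$ with grading operator $\epsilon=\mathrm{diag}(1,-1)$, grading automorphism $\alpha(x)=\epsilon x\epsilon$ and superinvolution $x^*=\epsilon\,x^\dagger\,\epsilon$ ($x^\dagger$ the ordinary adjoint). A super operator system is an abstract unital operator space $(\mathfrak X,\mathbf 1)$ with an antilinear involution $*$ fixing $\mathbf 1$ such that $[x_{ij}]\mapsto[x_{ji}^*]$ is isometric on each $M_n(\mathfrak X)$; equivalently (up to complete isometry) a norm closed subspace of some $\mathcal B(\widehat{\mathcal H})$ containing the identity and invariant under the superinvolution. Superpositivity: represent $\mathfrak X$ (and likewise $\mathfrak Y$) completely isometrically, unitally and $*$-linearly (with respect to the superinvolution) in some $\mathcal B(\widehat{\mathcal H})$. For $x\in M_n(\mathfrak X)$ hermitian (i.e. $[x_{ij}]=[x_{ji}^*]$), write $x=x_0+x_1$ with $x_0=\frac12(x+\alpha(x))$ even and $x_1=\frac12(x-\alpha(x))$ odd ($\alpha$ applied entrywise),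 and put $\iota(x)=x_0+i\,x_1$; $x$ is called superpositive if $\iota(x)$ is a positive operator on $\widehat{\mathcal H}^n$. A $*$-linear map $\psi$ is superpositive if it maps superpositive elements of $\mathfrak X$ to superpositive elements of $\mathfrak Y$, and completely superpositive if every amplification $\psi_n:M_n(\mathfrak X)\to M_n(\mathfrak Y)$ does so. A map is unital if it sends $\mathbf 1$ to $\mathbf 1$. *)

theory Defs
  imports Complex_Main
begin

text \<open>Together with sort banach
(completeness) this is a complex Hilbert space.\<close>

class hcinner = real_normed_vector +
  fixes hscaleC :: "complex \<Rightarrow> 'a \<Rightarrow> 'a"
    and hcinner :: "'a \<Rightarrow> 'a \<Rightarrow> complex"
  assumes hscaleC_add_right: "hscaleC a (x + y) = hscaleC a x + hscaleC a y"
    and hscaleC_add_left: "hscaleC (a + b) x = hscaleC a x + hscaleC b x"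
    and hscaleC_hscaleC: "hscaleC a (hscaleC b x) = hscaleC (a * b) x"
    and hscaleC_one: "hscaleC 1 x = x"
    and scaleR_hscaleC: "scaleR r x = hscaleC (complex_of_real r) x"
    and hcinner_add_right: "hcinner x (y + z) = hcinner x y + hcinner x z"
    and hcinner_scaleC_right: "hcinner x (hscaleC a y) = a * hcinner x y"
    and hcinner_commute: "hcinner y x = cnj (hcinner x y)"
    and norm_hcinner: "norm x = sqrt (Re (hcinner x x))"

type_synonym 'h op = "'h \<Rightarrow> 'h"
type_synonym 'h mat = "nat \<Rightarrow> nat \<Rightarrow> 'h op"

definition clinear_op :: "('a::hcinner) op \<Rightarrow> bool" where
  "clinear_op T \<longleftrightarrow> (\<forall>x y. T (x + y) = T x + T y) \<and> (\<forall>a x. T (hscaleC a x) = hscaleC a (T x))"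

definition bounded_op :: "('a::hcinner) op \<Rightarrow> bool" where
  "bounded_op T \<longleftrightarrow> clinear_op T \<and> (\<exists>K. \<forall>x. norm (T x) \<le> K * norm x)"

definition adj :: "('a::hcinner) op \<Rightarrow> 'a op" where
  "adj T = (SOME S. \<forall>x y. hcinner (T x) y = hcinner x (S y))"

definition opnorm :: "('a::hcinner) op \<Rightarrow> real" where
  "opnorm T = Sup {norm (T x) | x. norm x \<le> 1}"

text \<open>A grading operator on the Hilbert space: a bounded self-adjoint involution
(equivalently diag(1,-1) w.r.t. the decomposition into its +1 / -1 eigenspaces).\<close>
definition grading :: "('a::hcinner) op \<Rightarrow> bool" where
  "grading \<epsilon> \<longleftrightarrow> bounded_op \<epsilon> \<and> (\<forall>x. \<epsilon> (\<epsilon> x) = x) \<and>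
                 (\<forall>x y. hcinner (\<epsilon> x) y = hcinner x (\<epsilon> y))"

definition galpha :: "('a::hcinner) op \<Rightarrow> 'a op \<Rightarrow> 'a op" where
  "galpha \<epsilon> T = \<epsilon> \<circ> T \<circ> \<epsilon>"

definition superadj :: "('a::hcinner) op \<Rightarrow> 'a op \<Rightarrow> 'a op" where
  "superadj \<epsilon> T = \<epsilon> \<circ> adj T \<circ> \<epsilon>"

definition super_opsys :: "('a::{hcinner,banach}) op \<Rightarrow> 'a op set \<Rightarrow> bool" where
  "super_opsys \<epsilon> X \<longleftrightarrow> grading \<epsilon> \<and>
     X \<subseteq> {T. bounded_op T} \<and> id \<in> X \<and> (\<lambda>x. 0) \<in> X \<and>
     (\<forall>S\<in>X. \<forall>T\<in>X. (\<lambda>x. S x + T x) \<in> X) \<and>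
     (\<forall>a. \<forall>T\<in>X. (\<lambda>x. hscaleC a (T x)) \<in> X) \<and>
     (\<forall>T f. bounded_op T \<and> (\<forall>k. f k \<in> X) \<and>
            (\<lambda>k. opnorm (\<lambda>x. f k x - T x)) \<longlonglongrightarrow> 0 \<longrightarrow> T \<in> X) \<and>
     (\<forall>T\<in>X. superadj \<epsilon> T \<in> X)"

definition mat_in :: "nat \<Rightarrow> 'a op set \<Rightarrow> 'a mat \<Rightarrow> bool" where
  "mat_in n X A \<longleftrightarrow> (\<forall>i<n. \<forall>j<n. A i j \<in> X)"

definition mat_apply :: "nat \<Rightarrow> ('a::hcinner) mat \<Rightarrow> (nat \<Rightarrow> 'a) \<Rightarrow> (nat \<Rightarrow> 'a)" where
  "mat_apply n A v = (\<lambda>i. if i < n then (\<Sum>j<n. A i j (v j)) else 0)"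

definition vnorm :: "nat \<Rightarrow> (nat \<Rightarrow> 'a::hcinner) \<Rightarrow> real" where
  "vnorm n v = sqrt (\<Sum>i<n. (norm (v i))\<^sup>2)"

definition vinner :: "nat \<Rightarrow> (nat \<Rightarrow> 'a::hcinner) \<Rightarrow> (nat \<Rightarrow> 'a) \<Rightarrow> complex" where
  "vinner n u v = (\<Sum>i<n. hcinner (u i) (v i))"

definition mnorm :: "nat \<Rightarrow> ('a::hcinner) mat \<Rightarrow> real" where
  "mnorm n A = Sup {vnorm n (mat_apply n A v) | v. vnorm n v \<le> 1}"

definition mpositive :: "nat \<Rightarrow> ('a::hcinner) mat \<Rightarrow> bool" where
  "mpositive n A \<longleftrightarrow> (\<forall>v. vinner n v (mat_apply n A v) \<in> \<real> \<and>
                            0 \<le> Re (vinner n v (mat_apply n A v)))"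

definition mherm :: "('a::hcinner) op \<Rightarrow> nat \<Rightarrow> 'a mat \<Rightarrow> bool" where
  "mherm \<epsilon> n A \<longleftrightarrow> (\<forall>i<n. \<forall>j<n. A i j = superadj \<epsilon> (A j i))"

text \<open>iota(x) = x_0 + i x_1 for x_0 = (x + alpha x)/2, x_1 = (x - alpha x)/2.\<close>
definition iota_op :: "('a::hcinner) op \<Rightarrow> 'a op \<Rightarrow> 'a op" where
  "iota_op \<epsilon> T = (\<lambda>v. hscaleC (1/2) (T v + galpha \<epsilon> T v) + hscaleC (\<i>/2) (T v - galpha \<epsilon> T v))"

definition superpos :: "('a::hcinner) op \<Rightarrow> nat \<Rightarrow> 'a mat \<Rightarrow> bool" where
  "superpos \<epsilon> n A \<longleftrightarrow> mherm \<epsilon> n A \<and> mpositive n (\<lambda>i j. iota_op \<epsilon> (A i j))"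

definition amp :: "('a op \<Rightarrow> 'b op) \<Rightarrow> 'a mat \<Rightarrow> 'b mat" where
  "amp \<phi> A = (\<lambda>i j. \<phi> (A i j))"

definition star_linear_map ::
  "('a::hcinner) op \<Rightarrow> 'a op set \<Rightarrow> ('b::hcinner) op \<Rightarrow> 'b op set \<Rightarrow> ('a op \<Rightarrow> 'b op) \<Rightarrow> bool" where
  "star_linear_map \<epsilon>X X \<epsilon>Y Y \<phi> \<longleftrightarrow>
     (\<forall>x\<in>X. \<phi> x \<in> Y) \<and>
     (\<forall>x\<in>X. \<forall>y\<in>X. \<phi> (\<lambda>v. x v + y v) = (\<lambda>w. \<phi> x w + \<phi> y w)) \<and>
     (\<forall>a. \<forall>x\<in>X. \<phi> (\<lambda>v. hscaleC a (x v)) = (\<lambda>w. hscaleC a (\<phi> x w))) \<and>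
     (\<forall>x\<in>X. \<phi> (superadj \<epsilon>X x) = superadj \<epsilon>Y (\<phi> x))"

definition unital_map :: "('a op \<Rightarrow> 'b op) \<Rightarrow> bool" where
  "unital_map \<phi> \<longleftrightarrow> \<phi> id = id"

definition contractive_map :: "('a::hcinner) op set \<Rightarrow> ('a op \<Rightarrow> ('b::hcinner) op) \<Rightarrow> bool" where
  "contractive_map X \<phi> \<longleftrightarrow> (\<forall>x\<in>X. opnorm (\<phi> x) \<le> opnorm x)"

definition completely_contractive_map :: "('a::hcinner) op set \<Rightarrow> ('a op \<Rightarrow> ('b::hcinner) op) \<Rightarrow> bool" where
  "completely_contractive_map X \<phi> \<longleftrightarrow>
     (\<forall>n A. mat_in n X A \<longrightarrow> mnorm n (amp \<phi> A) \<le> mnorm n A)"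

text \<open>Superpositive: superpositive elements of X (= M_1(X)) go to superpositive elements.\<close>
definition superpositive_map ::
  "('a::hcinner) op \<Rightarrow> 'a op set \<Rightarrow> ('b::hcinner) op \<Rightarrow> ('a op \<Rightarrow> 'b op) \<Rightarrow> bool" where
  "superpositive_map \<epsilon>X X \<epsilon>Y \<phi> \<longleftrightarrow>
     (\<forall>x\<in>X. superpos \<epsilon>X 1 (\<lambda>_ _. x) \<longrightarrow> superpos \<epsilon>Y 1 (\<lambda>_ _. \<phi> x))"

definition completely_superpositive_map ::
  "('a::hcinner) op \<Rightarrow> 'a op set \<Rightarrow> ('b::hcinner) op \<Rightarrow> ('a op \<Rightarrow> 'b op) \<Rightarrow> bool" where
  "completely_superpositive_map \<epsilon>X X \<epsilon>Y \<phi> \<longleftrightarrow>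
     (\<forall>n A. mat_in n X A \<and> superpos \<epsilon>X n A \<longrightarrow> superpos \<epsilon>Y n (amp \<phi> A))"

end

theory Submission
  imports Defs "HOL-Analysis.L2_Norm"
begin

text \<open>For x hermitian with respect to the superinvolution, \<langle>v, \<iota>(x) v\<rangle> = Re ((1 + i) \<langle>v, x v\<rangle>),
  so x is superpositive iff Re ((1 + i) \<langle>v, x v\<rangle>) \<ge> 0 for all v. Expanding norms, this holds iff
  \<parallel>t 1 - (1 + i) x\<parallel>^2 \<le> t^2 + 2 \<parallel>x\<parallel>^2 for all t > 0 (for the converse let t grow); a unital
  *-linear (complete) contraction preserves these inequalities, hence (complete) superpositivity.

  For the bound, x \<in> M_n(X) is dilated to the superpositive block matrix [[c 1, x], [x*, c 1]],
  c = 2 \<parallel>x\<parallel>. Its image under \<psi> is superpositive, and testing this against (-\<alpha> \<iota>(\<psi>(x)) v, v)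
  bounds \<iota>(\<psi>(x)) by c p and hence \<psi>(x) by 2 c p, where p bounds the quadratic form of \<iota>(\<psi>(1)):
  p \<le> 2 \<parallel>\<psi>(1)\<parallel> in general and p = 1 for unital \<psi>.\<close>

lemma hscaleC_zero_right [simp]: "hscaleC a (0::'a::hcinner) = 0"
  using hscaleC_add_right[of a "0::'a" 0] by simp

lemma hscaleC_zero_left [simp]: "hscaleC 0 (x::'a::hcinner) = 0"
  using hscaleC_add_left[of 0 0 x] by simp

lemma hscaleC_sum: "hscaleC a (\<Sum>i\<in>A. f i) = (\<Sum>i\<in>A. hscaleC a (f i::'a::hcinner))"
  by (induction A rule: infinite_finite_induct) (auto simp: hscaleC_add_right)

lemma hcinner_add_left: "hcinner ((x::'a::hcinner) + y) z = hcinner x z + hcinner y z"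
  by (metis hcinner_commute hcinner_add_right complex_cnj_add)

lemma hcinner_scaleC_left: "hcinner (hscaleC a (x::'a::hcinner)) y = cnj a * hcinner x y"
  by (metis hcinner_commute hcinner_scaleC_right complex_cnj_mult)

lemma hcinner_zero_right [simp]: "hcinner (x::'a::hcinner) 0 = 0"
  using hcinner_add_right[of x 0 0] by simp

lemma hcinner_zero_left [simp]: "hcinner 0 (x::'a::hcinner) = 0"
  using hcinner_add_left[of 0 0 x] by simp

lemma hcinner_minus_right: "hcinner (x::'a::hcinner) (- y) = - hcinner x y"
  using hcinner_add_right[of x y "-y"] by (simp add: eq_neg_iff_add_eq_0 add.commute)

lemma hcinner_minus_left: "hcinner (- (x::'a::hcinner)) y = - hcinner x y"
  using hcinner_add_left[of x "-x" y] by (simp add: eq_neg_iff_add_eq_0 add.commute)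

lemma hcinner_diff_right: "hcinner (x::'a::hcinner) (y - z) = hcinner x y - hcinner x z"
  using hcinner_add_right[of x y "-z"] hcinner_minus_right[of x z] by simp

lemma hcinner_diff_left: "hcinner ((x::'a::hcinner) - y) z = hcinner x z - hcinner y z"
  using hcinner_add_left[of x "-y" z] hcinner_minus_left[of y z] by simp

lemma hcinner_sum_right: "hcinner (x::'a::hcinner) (\<Sum>i\<in>A. f i) = (\<Sum>i\<in>A. hcinner x (f i))"
  by (induction A rule: infinite_finite_induct) (auto simp: hcinner_add_right)

lemma cnj_mult_self: "cnj c * c = complex_of_real ((cmod c)\<^sup>2)"
  using complex_norm_square[of c] by (simp add: mult.commute)

lemma hcinner_self_norm: "hcinner (x::'a::hcinner) x = complex_of_real ((norm x)\<^sup>2)"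
proof -
  have "Im (hcinner x x) = 0"
    using arg_cong[OF hcinner_commute[of x x], of Im] by simp
  moreover have "0 \<le> Re (hcinner x x)"
    by (metis norm_ge_zero norm_hcinner not_le real_sqrt_lt_0_iff)
  ultimately show ?thesis
    using norm_hcinner[of x] by (simp add: complex_eq_iff)
qed

lemma norm_hscaleC: "norm (hscaleC a (x::'a::hcinner)) = cmod a * norm x"
proof -
  have "complex_of_real ((norm (hscaleC a x))\<^sup>2) = cnj a * a * hcinner x x"
    unfolding hcinner_self_norm[symmetric]
    by (simp add: hcinner_scaleC_left hcinner_scaleC_right mult.assoc)
  also have "\<dots> = complex_of_real ((cmod a * norm x)\<^sup>2)"
    unfolding cnj_mult_self hcinner_self_norm by (simp add: power_mult_distrib)
  finally show ?thesis
    by (simp only: of_real_eq_iff power2_eq_iff_nonneg norm_ge_zero mult_nonneg_nonneg)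
qed

lemma hcinner_eqI: "(\<And>z. hcinner z (x::'a::hcinner) = hcinner z y) \<Longrightarrow> x = y"
  by (metis hcinner_diff_right hcinner_self_norm norm_eq_zero of_real_eq_0_iff
      right_minus_eq zero_eq_power2)

lemma norm_parallelogram:
  "(norm ((a::'a::hcinner) - b))\<^sup>2 + (norm (a + b))\<^sup>2 = 2 * (norm a)\<^sup>2 + 2 * (norm b)\<^sup>2"
proof -
  have "complex_of_real ((norm (a - b))\<^sup>2 + (norm (a + b))\<^sup>2)
      = hcinner (a - b) (a - b) + hcinner (a + b) (a + b)"
    by (simp add: hcinner_self_norm)
  also have "\<dots> = 2 * hcinner a a + 2 * hcinner b b"
    by (simp add: hcinner_diff_left hcinner_diff_right hcinner_add_left hcinner_add_right)
  also have "\<dots> = complex_of_real (2 * (norm a)\<^sup>2 + 2 * (norm b)\<^sup>2)"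
    by (simp add: hcinner_self_norm)
  finally show ?thesis
    by (simp only: of_real_eq_iff)
qed

lemma norm_diff_hscaleC_sq:
  "complex_of_real ((norm ((x::'a::hcinner) - hscaleC a y))\<^sup>2)
     = hcinner x x - a * hcinner x y - cnj (a * hcinner x y) + complex_of_real ((cmod a)\<^sup>2) * hcinner y y"
proof -
  have "hcinner (x - hscaleC a y) (x - hscaleC a y)
      = hcinner x x - a * hcinner x y - cnj a * hcinner y x + cnj a * a * hcinner y y"
    by (simp add: hcinner_diff_left hcinner_diff_right hcinner_scaleC_left hcinner_scaleC_right
        algebra_simps)
  then show ?thesis
    by (simp add: hcinner_self_norm hcinner_commute[of y x] cnj_mult_self)
qed

lemma cmod_le_of_quadratic_nonneg:
  fixes X Y :: real and c :: complex
  assumes "0 \<le> X" "0 \<le> Y" and quadratic: "\<And>a. 0 \<le> X - 2 * Re (a * c) + (cmod a)\<^sup>2 * Y"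
  shows "cmod c \<le> sqrt X * sqrt Y"
proof (cases "Y = 0")
  case True
  have "c = 0"
  proof (rule ccontr)
    assume "c \<noteq> 0"
    then have pos: "0 < (cmod c)\<^sup>2" by simp
    have "0 \<le> X - 2 * Re (complex_of_real ((X + 1) / (cmod c)\<^sup>2) * cnj c * c)"
      using quadratic[of "complex_of_real ((X + 1) / (cmod c)\<^sup>2) * cnj c"] True by simp
    also have "Re (complex_of_real ((X + 1) / (cmod c)\<^sup>2) * cnj c * c) = X + 1"
      using pos unfolding mult.assoc cnj_mult_self by (simp flip: of_real_mult)
    finally show False using assms(1) by simp
  qed
  then show ?thesis using assms by simp
next
  case False
  then have Y: "0 < Y" using assms by simp
  have "0 \<le> X - 2 * Re (complex_of_real (1/Y) * cnj c * c) + (cmod (complex_of_real (1/Y) * cnj c))\<^sup>2 * Y"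
    by (rule quadratic)
  also have "\<dots> = X - (cmod c)\<^sup>2 / Y"
    using Y unfolding mult.assoc cnj_mult_self
    by (simp add: norm_mult norm_divide power2_eq_square field_simps)
  finally have "(cmod c)\<^sup>2 \<le> X * Y" using Y by (simp add: field_simps)
  then show ?thesis by (metis real_sqrt_le_mono real_sqrt_mult real_sqrt_abs abs_norm_cancel)
qed

lemma hcinner_cauchy_schwarz: "cmod (hcinner (x::'a::hcinner) y) \<le> norm x * norm y"
proof -
  have "cmod (cnj (hcinner x y)) \<le> sqrt ((norm x)\<^sup>2) * sqrt ((norm y)\<^sup>2)"
  proof (rule cmod_le_of_quadratic_nonneg)
    fix a :: complex
    have "0 \<le> (norm (x - hscaleC (cnj a) y))\<^sup>2" by simp
    also have "\<dots> = (norm x)\<^sup>2 - 2 * Re (a * cnj (hcinner x y)) + (cmod a)\<^sup>2 * (norm y)\<^sup>2"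
      using arg_cong[OF norm_diff_hscaleC_sq[of x "cnj a" y], of Re]
      by (simp add: hcinner_self_norm)
    finally show "0 \<le> (norm x)\<^sup>2 - 2 * Re (a * cnj (hcinner x y)) + (cmod a)\<^sup>2 * (norm y)\<^sup>2" .
  qed auto
  then show ?thesis by simp
qed

lemma hcinner_eq_0_if_norm_minimal:
  assumes "\<And>a. norm e \<le> norm ((e::'a::hcinner) - hscaleC a q)"
  shows "hcinner e q = 0"
proof -
  have "cmod (hcinner e q) \<le> sqrt 0 * sqrt ((norm q)\<^sup>2)"
  proof (rule cmod_le_of_quadratic_nonneg)
    fix a :: complex
    have "(norm e)\<^sup>2 \<le> (norm (e - hscaleC a q))\<^sup>2"
      using assms[of a] by (simp add: power_mono)
    also have "\<dots> = (norm e)\<^sup>2 - 2 * Re (a * hcinner e q) + (cmod a)\<^sup>2 * (norm q)\<^sup>2"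
      using arg_cong[OF norm_diff_hscaleC_sq[of e a q], of Re] by (simp add: hcinner_self_norm)
    finally show "0 \<le> 0 - 2 * Re (a * hcinner e q) + (cmod a)\<^sup>2 * (norm q)\<^sup>2" by simp
  qed auto
  then show ?thesis by simp
qed

section \<open>Riesz representation and adjoints\<close>

lemma minimizing_sequence_Cauchy:
  fixes k :: "nat \<Rightarrow> 'a::hcinner" and d :: real
  assumes d: "0 \<le> d"
    and midpoint: "\<And>m n. d \<le> norm (x0 - scaleR (1/2) (k m + k n))"
    and approx: "\<And>n. (norm (x0 - k n))\<^sup>2 < d\<^sup>2 + 1 / (real n + 1)"
  shows "Cauchy k"
proof (rule metric_CauchyI)
  have bound: "(norm (k m - k n))\<^sup>2 \<le> 2 / (real n + 1) + 2 / (real m + 1)" for m n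
  proof -
    have "x0 - k n + (x0 - k m) = scaleR 2 (x0 - scaleR (1/2) (k m + k n))"
      by (simp add: algebra_simps scaleR_2)
    then have "2 * d \<le> norm (x0 - k n + (x0 - k m))"
      using midpoint[of m n] by simp
    then have "4 * d\<^sup>2 \<le> (norm (x0 - k n + (x0 - k m)))\<^sup>2"
      using power_mono[of "2 * d" _ 2] d by (simp add: power_mult_distrib)
    then show ?thesis
      using norm_parallelogram[of "x0 - k n" "x0 - k m"] approx[of n] approx[of m] by simp
  qed
  fix e :: real assume "0 < e"
  then have "0 < e\<^sup>2 / 4" by simp
  then obtain N :: nat where N: "1 / real (Suc N) < e\<^sup>2 / 4"
    by (rule nat_approx_posE)
  show "\<exists>M. \<forall>m\<ge>M. \<forall>n\<ge>M. dist (k m) (k n) < e"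
  proof (intro exI allI impI)
    fix m n assume "N \<le> m" "N \<le> n"
    then have "2 / (real n + 1) \<le> 2 / (real N + 1)" "2 / (real m + 1) \<le> 2 / (real N + 1)"
      by (simp_all add: frac_le)
    moreover have "4 / (real N + 1) < e\<^sup>2"
      using N by (simp add: field_simps)
    ultimately have "(norm (k m - k n))\<^sup>2 < e\<^sup>2"
      using bound[of m n] by linarith
    then show "dist (k m) (k n) < e"
      using \<open>0 < e\<close> unfolding dist_norm by (auto intro: power2_less_imp_less)
  qed
qed

lemma norm_diff_limit_le_if_minimizing:
  fixes k :: "nat \<Rightarrow> 'a::real_normed_vector"
  assumes kp: "k \<longlonglongrightarrow> p" and d: "0 \<le> d"
    and approx: "\<And>n. (norm (x0 - k n))\<^sup>2 < d\<^sup>2 + 1 / (real n + 1)"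
  shows "norm (x0 - p) \<le> d"
proof (rule field_le_epsilon)
  fix e :: real assume "0 < e"
  then have "0 < 2 * d * e + e\<^sup>2"
    using d by (simp add: add_nonneg_pos)
  then obtain N :: nat where N: "1 / real (Suc N) < 2 * d * e + e\<^sup>2"
    by (rule nat_approx_posE)
  have "norm (x0 - k n) \<le> d + e" if "N \<le> n" for n
  proof -
    have "1 / (real n + 1) \<le> 1 / (real N + 1)" using that by (simp add: frac_le)
    then have "(norm (x0 - k n))\<^sup>2 < (d + e)\<^sup>2"
      using approx[of n] N unfolding power2_sum by (simp add: add.commute)
    moreover have "0 \<le> d + e" using d \<open>0 < e\<close> by simp
    ultimately show ?thesis by (rule less_imp_le[OF power2_less_imp_less])
  qed
  moreover have "(\<lambda>n. norm (x0 - k n)) \<longlonglongrightarrow> norm (x0 - p)"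
    by (intro tendsto_intros kp)
  ultimately show "norm (x0 - p) \<le> d + e"
    by (intro LIMSEQ_le_const2) auto
qed

lemma bounded_functional_vanishes_at_limit:
  fixes f :: "'a::real_normed_vector \<Rightarrow> 'b::real_normed_vector"
  assumes add: "\<And>x y. f (x + y) = f x + f y" and bnd: "\<And>x. norm (f x) \<le> K * norm x"
    and kp: "k \<longlonglongrightarrow> p" and k0: "\<And>n. f (k n) = 0"
  shows "f p = 0"
proof -
  have "norm (f p) \<le> K * norm (p - k n)" for n
    using bnd[of "p - k n"] add[of "p - k n" "k n"] k0[of n] by simp
  moreover have "(\<lambda>n. K * norm (p - k n)) \<longlonglongrightarrow> K * norm (p - p)"
    by (intro tendsto_intros kp)
  ultimately have "norm (f p) \<le> K * norm (p - p)"
    by (intro LIMSEQ_le_const) auto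
  then show ?thesis by simp
qed

lemma kernel_nearest_point:
  fixes f :: "'a::{hcinner,banach} \<Rightarrow> complex"
  assumes add: "\<And>x y. f (x + y) = f x + f y"
    and scal: "\<And>a x. f (hscaleC a x) = a * f x"
    and bnd: "\<And>x. cmod (f x) \<le> K * norm x"
  obtains p where "f p = 0" "\<And>k. f k = 0 \<Longrightarrow> norm (x0 - p) \<le> norm (x0 - k)"
proof -
  define S where "S = {norm (x0 - k) |k. f k = 0}"
  define d where "d = Inf S"
  have f0: "f 0 = 0" using add[of 0 0] by simp
  have S: "S \<noteq> {}" "bdd_below S"
    unfolding S_def using f0 by (auto intro: bdd_belowI[of _ 0])
  have d_le: "d \<le> norm (x0 - k)" if "f k = 0" for k
    unfolding d_def using that S by (intro cInf_lower) (auto simp: S_def)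
  have d: "0 \<le> d"
    unfolding d_def using S by (intro cInf_greatest) (auto simp: S_def)
  have "\<exists>k. f k = 0 \<and> (norm (x0 - k))\<^sup>2 < d\<^sup>2 + 1 / (real n + 1)" for n :: nat
  proof -
    have "d < sqrt (d\<^sup>2 + 1 / (real n + 1))"
      by (intro real_less_rsqrt) (simp add: add_pos_pos)
    then obtain k where k: "f k = 0" "norm (x0 - k) < sqrt (d\<^sup>2 + 1 / (real n + 1))"
      using cInf_lessD[OF S(1)] unfolding d_def S_def by blast
    then have "(norm (x0 - k))\<^sup>2 < (sqrt (d\<^sup>2 + 1 / (real n + 1)))\<^sup>2"
      by (intro power_strict_mono) auto
    with k show ?thesis
      by (auto simp: add_nonneg_nonneg)
  qed
  then obtain k :: "nat \<Rightarrow> 'a" where k0: "\<And>n. f (k n) = 0"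
    and approx: "\<And>n. (norm (x0 - k n))\<^sup>2 < d\<^sup>2 + 1 / (real n + 1)"
    by metis
  have "Cauchy k"
  proof (rule minimizing_sequence_Cauchy[OF d _ approx])
    show "d \<le> norm (x0 - scaleR (1/2) (k m + k n))" for m n
      by (rule d_le) (simp add: scaleR_hscaleC scal add k0)
  qed
  then obtain p where kp: "k \<longlonglongrightarrow> p"
    using Cauchy_convergent_iff convergent_def by blast
  show ?thesis
  proof (rule that)
    show "f p = 0"
      by (rule bounded_functional_vanishes_at_limit[OF add bnd kp k0])
    show "norm (x0 - p) \<le> norm (x0 - k')" if "f k' = 0" for k'
      using norm_diff_limit_le_if_minimizing[OF kp d approx] d_le[OF that] by simp
  qed
qed

lemma riesz_representation:
  fixes f :: "'a::{hcinner,banach} \<Rightarrow> complex"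
  assumes add: "\<And>x y. f (x + y) = f x + f y"
    and scal: "\<And>a x. f (hscaleC a x) = a * f x"
    and bnd: "\<And>x. cmod (f x) \<le> K * norm x"
  shows "\<exists>z. \<forall>x. f x = hcinner z x"
proof (cases "\<forall>x. f x = 0")
  case True
  then show ?thesis by (intro exI[of _ 0]) simp
next
  case False
  then obtain x0 where fx0: "f x0 \<noteq> 0" by blast
  have fdiff: "f (x - y) = f x - f y" for x y
    using add[of "x - y" y] by simp
  obtain p where fp: "f p = 0" and nearest: "\<And>k. f k = 0 \<Longrightarrow> norm (x0 - p) \<le> norm (x0 - k)"
    using kernel_nearest_point[OF add scal bnd] by blast
  define e where "e = x0 - p"
  have orth: "hcinner e q = 0" if "f q = 0" for q
  proof (rule hcinner_eq_0_if_norm_minimal)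
    fix a
    have "f (p + hscaleC a q) = 0" using fp that by (simp add: add scal)
    then show "norm e \<le> norm (e - hscaleC a q)"
      using nearest unfolding e_def by (simp add: diff_diff_eq)
  qed
  have fe: "f e = f x0" unfolding e_def by (simp add: fdiff fp)
  then have "e \<noteq> 0" using fx0 scal[of 0 0] by auto
  then have ne: "(norm e)\<^sup>2 \<noteq> 0" by simp
  show ?thesis
  proof (intro exI allI)
    fix x
    have "hcinner e (x - hscaleC (f x / f e) e) = 0"
      using fe fx0 by (intro orth) (simp add: fdiff scal)
    then have "hcinner e x = f x / f e * complex_of_real ((norm e)\<^sup>2)"
      by (simp add: hcinner_diff_right hcinner_scaleC_right hcinner_self_norm)
    then show "f x = hcinner (hscaleC (cnj (f e) / complex_of_real ((norm e)\<^sup>2)) e) x"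
      unfolding hcinner_scaleC_left using fe fx0 ne by (simp add: field_simps)
  qed
qed

lemma bounded_op_linear:
  assumes "bounded_op T"
  shows "T (x + y) = T x + T y" "T (hscaleC a x) = hscaleC a (T x)"
  using assms unfolding bounded_op_def clinear_op_def by auto

definition is_adj :: "('a::hcinner) op \<Rightarrow> 'a op \<Rightarrow> bool" where
  "is_adj T S \<longleftrightarrow> (\<forall>x y. hcinner (T x) y = hcinner x (S y))"

lemma is_adj_adj:
  fixes T :: "('a::{hcinner,banach}) op"
  assumes "bounded_op T"
  shows "is_adj T (adj T)"
proof -
  obtain K where K: "\<And>x. norm (T x) \<le> K * norm x" using assms unfolding bounded_op_def by blast
  have "\<exists>z. \<forall>x. hcinner y (T x) = hcinner z x" for y
  proof (rule riesz_representation[where K = "norm y * K"])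
    show "hcinner y (T (x + x')) = hcinner y (T x) + hcinner y (T x')" for x x'
      by (simp add: bounded_op_linear[OF assms] hcinner_add_right)
    show "hcinner y (T (hscaleC a x)) = a * hcinner y (T x)" for a x
      by (simp add: bounded_op_linear[OF assms] hcinner_scaleC_right)
    show "cmod (hcinner y (T x)) \<le> norm y * K * norm x" for x
    proof -
      have "cmod (hcinner y (T x)) \<le> norm y * norm (T x)" by (rule hcinner_cauchy_schwarz)
      also have "\<dots> \<le> norm y * (K * norm x)" by (intro mult_left_mono K) simp
      finally show ?thesis by (simp add: mult.assoc)
    qed
  qed
  then obtain S where S: "\<And>y x. hcinner y (T x) = hcinner (S y) x" by metis
  have "\<forall>x y. hcinner (T x) y = hcinner x (S y)"
    using S by (metis hcinner_commute)
  then have "\<exists>S. \<forall>x y. hcinner (T x) y = hcinner x (S y)" by blast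
  then show ?thesis unfolding is_adj_def adj_def by (rule someI_ex)
qed

lemma adj_eqI:
  assumes "is_adj T S"
  shows "adj T = S"
proof -
  have ex: "\<exists>S. \<forall>x y. hcinner (T x) y = hcinner x (S y)" using assms unfolding is_adj_def by blast
  have A: "\<forall>x y. hcinner (T x) y = hcinner x (adj T y)" unfolding adj_def by (rule someI_ex[OF ex])
  show ?thesis
  proof
    fix y show "adj T y = S y"
      by (rule hcinner_eqI) (metis A assms is_adj_def)
  qed
qed

lemma is_adj_sym: "is_adj T S \<Longrightarrow> is_adj S T"
  unfolding is_adj_def by (metis hcinner_commute)

lemma bounded_op_zero: "bounded_op T \<Longrightarrow> T 0 = 0"
  using bounded_op_linear(2)[of T 0 0] by simp

lemma bounded_op_id: "bounded_op (id :: ('a::hcinner) op)"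
  unfolding bounded_op_def clinear_op_def by (auto intro: exI[of _ 1])

lemma bounded_op_comb:
  assumes "bounded_op T" "bounded_op S"
  shows "bounded_op (\<lambda>v. hscaleC a (T v) + hscaleC b (S v))"
proof -
  obtain K where K: "\<And>x. norm (T x) \<le> K * norm x" using assms(1) unfolding bounded_op_def by blast
  obtain L where L: "\<And>x. norm (S x) \<le> L * norm x" using assms(2) unfolding bounded_op_def by blast
  have "norm (hscaleC a (T x) + hscaleC b (S x)) \<le> (cmod a * K + cmod b * L) * norm x" for x
  proof -
    have "norm (hscaleC a (T x) + hscaleC b (S x)) \<le> cmod a * norm (T x) + cmod b * norm (S x)"
      using norm_triangle_ineq[of "hscaleC a (T x)" "hscaleC b (S x)"] by (simp add: norm_hscaleC)
    also have "\<dots> \<le> cmod a * (K * norm x) + cmod b * (L * norm x)"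
      by (intro add_mono mult_left_mono K L) auto
    finally show ?thesis by (simp add: algebra_simps)
  qed
  moreover have "clinear_op (\<lambda>v. hscaleC a (T v) + hscaleC b (S v))"
    unfolding clinear_op_def
  proof (intro conjI allI)
    fix x y
    show "hscaleC a (T (x + y)) + hscaleC b (S (x + y))
        = hscaleC a (T x) + hscaleC b (S x) + (hscaleC a (T y) + hscaleC b (S y))"
      by (simp add: bounded_op_linear[OF assms(1)] bounded_op_linear[OF assms(2)] hscaleC_add_right
          algebra_simps)
  next
    fix c x
    show "hscaleC a (T (hscaleC c x)) + hscaleC b (S (hscaleC c x))
        = hscaleC c (hscaleC a (T x) + hscaleC b (S x))"
      by (simp add: bounded_op_linear[OF assms(1)] bounded_op_linear[OF assms(2)] hscaleC_add_right
          hscaleC_hscaleC mult.commute)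
  qed
  ultimately show ?thesis unfolding bounded_op_def by blast
qed

lemma bdd_above_opnorm_set:
  assumes "bounded_op T"
  shows "bdd_above {norm (T x) |x. norm x \<le> 1}"
proof -
  obtain K where K: "\<And>x. norm (T x) \<le> K * norm x" using assms unfolding bounded_op_def by blast
  show ?thesis
  proof (rule bdd_aboveI[of _ "\<bar>K\<bar>"])
    fix r assume "r \<in> {norm (T x) |x. norm x \<le> 1}"
    then obtain x where r: "r = norm (T x)" "norm x \<le> 1" by blast
    have "norm (T x) \<le> \<bar>K\<bar> * norm x"
      using K[of x] by (smt (verit, best) mult_right_mono norm_ge_zero)
    also have "\<dots> \<le> \<bar>K\<bar>" using r(2) by (simp add: mult_left_le)
    finally show "r \<le> \<bar>K\<bar>" using r by simp
  qed
qed

lemma opnorm_nonneg: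
  assumes "bounded_op T"
  shows "0 \<le> opnorm T"
proof -
  have "norm (T 0) \<le> opnorm T"
    unfolding opnorm_def using bdd_above_opnorm_set[OF assms] by (intro cSup_upper) auto
  then show ?thesis using bounded_op_zero[OF assms] by simp
qed

lemma norm_le_opnorm:
  assumes "bounded_op T"
  shows "norm (T x) \<le> opnorm T * norm x"
proof (cases "x = 0")
  case True
  then show ?thesis using bounded_op_zero[OF assms] by simp
next
  case False
  define y where "y = hscaleC (complex_of_real (1 / norm x)) x"
  have "norm y = 1" using False by (simp add: y_def norm_hscaleC norm_divide)
  then have "norm (T y) \<le> opnorm T"
    unfolding opnorm_def using bdd_above_opnorm_set[OF assms] by (intro cSup_upper) auto
  moreover have "norm (T y) = norm (T x) / norm x"
    by (simp add: y_def bounded_op_linear(2)[OF assms] norm_hscaleC norm_divide)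
  ultimately show ?thesis using False by (simp add: field_simps)
qed

lemma
  assumes "grading \<epsilon>"
  shows grading_add: "\<epsilon> (x + y) = \<epsilon> x + \<epsilon> y"
    and grading_hscaleC: "\<epsilon> (hscaleC a x) = hscaleC a (\<epsilon> x)"
    and grading_involution: "\<epsilon> (\<epsilon> x) = x"
    and grading_hcinner: "hcinner (\<epsilon> x) y = hcinner x (\<epsilon> y)"
  using assms unfolding grading_def bounded_op_def clinear_op_def by auto

lemma grading_zero: "grading \<epsilon> \<Longrightarrow> \<epsilon> 0 = 0"
  using grading_hscaleC[of \<epsilon> 0 0] by simp

lemma grading_norm: "grading \<epsilon> \<Longrightarrow> norm (\<epsilon> x) = norm x"
  unfolding norm_hcinner by (simp add: grading_involution grading_hcinner)

lemma hcinner_grading_grading: "grading \<epsilon> \<Longrightarrow> hcinner (\<epsilon> x) (\<epsilon> y) = hcinner x y"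
  by (simp add: grading_involution grading_hcinner)

lemma hcinner_superadj:
  fixes T :: "('a::{hcinner,banach}) op"
  assumes "grading \<epsilon>" "bounded_op T"
  shows "hcinner x (superadj \<epsilon> T y) = hcinner (\<epsilon> (T (\<epsilon> x))) y"
proof -
  have "hcinner x (superadj \<epsilon> T y) = hcinner (\<epsilon> x) (adj T (\<epsilon> y))"
    by (simp add: superadj_def grading_hcinner[OF assms(1)])
  also have "\<dots> = hcinner (T (\<epsilon> x)) (\<epsilon> y)"
    using is_adj_adj[OF assms(2)] unfolding is_adj_def by simp
  also have "\<dots> = hcinner (\<epsilon> (T (\<epsilon> x))) y" by (simp add: grading_hcinner[OF assms(1)])
  finally show ?thesis .
qed

lemma superadj_superadj:
  fixes T :: "('a::{hcinner,banach}) op"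
  assumes "grading \<epsilon>" "bounded_op T"
  shows "superadj \<epsilon> (superadj \<epsilon> T) = T"
proof -
  have A: "is_adj T (adj T)" by (rule is_adj_adj[OF assms(2)])
  have "is_adj (\<epsilon> \<circ> adj T \<circ> \<epsilon>) (\<epsilon> \<circ> T \<circ> \<epsilon>)"
    using is_adj_sym[OF A] unfolding is_adj_def by (simp add: grading_hcinner[OF assms(1)] grading_involution[OF assms(1)])
  then have "adj (superadj \<epsilon> T) = \<epsilon> \<circ> T \<circ> \<epsilon>" unfolding superadj_def by (rule adj_eqI)
  then show ?thesis unfolding superadj_def by (simp add: fun_eq_iff grading_involution[OF assms(1)])
qed

lemma superadj_scaled_id:
  assumes "grading \<epsilon>"
  shows "superadj \<epsilon> (\<lambda>v. hscaleC (complex_of_real c) (id v))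
    = (\<lambda>v::'a::hcinner. hscaleC (complex_of_real c) (id v))"
proof -
  have "is_adj (\<lambda>v::'a. hscaleC (complex_of_real c) (id v)) (\<lambda>v. hscaleC (complex_of_real c) (id v))"
    unfolding is_adj_def by (simp add: hcinner_scaleC_left hcinner_scaleC_right)
  then have "adj (\<lambda>v::'a. hscaleC (complex_of_real c) (id v)) = (\<lambda>v. hscaleC (complex_of_real c) (id v))"
    by (rule adj_eqI)
  then show ?thesis
    unfolding superadj_def by (simp add: fun_eq_iff grading_hscaleC[OF assms] grading_involution[OF assms])
qed

lemma superadj_zero:
  assumes "grading \<epsilon>"
  shows "superadj \<epsilon> (\<lambda>v. 0) = (\<lambda>v::'a::hcinner. 0)"
proof -
  have "is_adj (\<lambda>v::'a. 0) (\<lambda>v. 0)" unfolding is_adj_def by simp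
  then have "adj (\<lambda>v::'a. 0) = (\<lambda>v. 0)" by (rule adj_eqI)
  then show ?thesis unfolding superadj_def by (simp add: fun_eq_iff grading_zero[OF assms])
qed

lemma vnorm_L2: "vnorm n v = L2_set (\<lambda>i. norm (v i)) {..<n}"
  unfolding vnorm_def L2_set_def by simp

lemma vnorm_nonneg[simp]: "0 \<le> vnorm n v"
  unfolding vnorm_def by (simp add: sum_nonneg)

lemma vnorm_sq: "(vnorm n v)\<^sup>2 = (\<Sum>i<n. (norm (v i))\<^sup>2)"
  unfolding vnorm_def by (simp add: sum_nonneg)

lemma vinner_self: "vinner n v v = complex_of_real ((vnorm n v)\<^sup>2)"
  unfolding vinner_def vnorm_sq by (simp add: hcinner_self_norm)

lemma vinner_CS: "cmod (vinner n u v) \<le> vnorm n u * vnorm n v"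
proof -
  have "cmod (vinner n u v) \<le> (\<Sum>i<n. cmod (hcinner (u i) (v i)))"
    unfolding vinner_def by (rule norm_sum)
  also have "\<dots> \<le> (\<Sum>i<n. \<bar>norm (u i)\<bar> * \<bar>norm (v i)\<bar>)"
    by (intro sum_mono) (simp add: hcinner_cauchy_schwarz)
  also have "\<dots> \<le> vnorm n u * vnorm n v" unfolding vnorm_L2 by (rule L2_set_mult_ineq)
  finally show ?thesis .
qed

lemma vnorm_cong: "(\<And>i. i < n \<Longrightarrow> u i = v i) \<Longrightarrow> vnorm n u = vnorm n v"
  unfolding vnorm_def by simp

lemma vinner_cong: "(\<And>i. i < n \<Longrightarrow> u i = u' i) \<Longrightarrow> (\<And>i. i < n \<Longrightarrow> v i = v' i) \<Longrightarrow> vinner n u v = vinner n u' v'"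
  unfolding vinner_def by simp

lemma vnorm_add: "vnorm n (\<lambda>i. u i + v i) \<le> vnorm n u + vnorm n v"
proof -
  have "vnorm n (\<lambda>i. u i + v i) \<le> L2_set (\<lambda>i. norm (u i) + norm (v i)) {..<n}"
    unfolding vnorm_L2 by (intro L2_set_mono norm_triangle_ineq) auto
  also have "\<dots> \<le> vnorm n u + vnorm n v" unfolding vnorm_L2 by (rule L2_set_triangle_ineq)
  finally show ?thesis .
qed

lemma vnorm_scale: "vnorm n (\<lambda>i. hscaleC a (v i)) = cmod a * vnorm n v"
  unfolding vnorm_L2 norm_hscaleC by (simp add: L2_set_right_distrib)

lemma vnorm_grading: "grading \<epsilon> \<Longrightarrow> vnorm n (\<lambda>i. \<epsilon> (v i)) = vnorm n v"
  unfolding vnorm_def by (simp add: grading_norm)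

lemma vnorm_zero_imp: "vnorm n v = 0 \<Longrightarrow> i < n \<Longrightarrow> v i = 0"
  unfolding vnorm_L2 by (simp add: L2_set_eq_0_iff)

lemma vinner_add_right: "vinner n u (\<lambda>i. v i + w i) = vinner n u v + vinner n u w"
  unfolding vinner_def by (simp add: hcinner_add_right sum.distrib)

lemma vinner_add_left: "vinner n (\<lambda>i. v i + w i) u = vinner n v u + vinner n w u"
  unfolding vinner_def by (simp add: hcinner_add_left sum.distrib)

lemma vinner_scale_right: "vinner n u (\<lambda>i. hscaleC a (v i)) = a * vinner n u v"
  unfolding vinner_def by (simp add: hcinner_scaleC_right sum_distrib_left)

lemma vinner_scale_left: "vinner n (\<lambda>i. hscaleC a (v i)) u = cnj a * vinner n v u"
  unfolding vinner_def by (simp add: hcinner_scaleC_left sum_distrib_left)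

lemma vinner_commute: "vinner n v u = cnj (vinner n u v)"
  unfolding vinner_def by (subst hcinner_commute) simp

lemma vinner_grading: "grading \<epsilon> \<Longrightarrow> vinner n u (\<lambda>i. \<epsilon> (v i)) = vinner n (\<lambda>i. \<epsilon> (u i)) v"
  unfolding vinner_def by (simp add: grading_hcinner)

definition mbounded :: "nat \<Rightarrow> ('a::hcinner) mat \<Rightarrow> bool" where
  "mbounded n M \<longleftrightarrow> (\<forall>i<n. \<forall>j<n. bounded_op (M i j))"

lemma mat_apply_scale:
  assumes "mbounded n M"
  shows "mat_apply n M (\<lambda>i. hscaleC a (v i)) = (\<lambda>i. hscaleC a (mat_apply n M v i))"
  using assms unfolding mat_apply_def mbounded_def
  by (auto simp: fun_eq_iff hscaleC_sum bounded_op_linear intro!: sum.cong)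

lemma mat_apply_zero:
  assumes "mbounded n M" "\<And>i. i < n \<Longrightarrow> v i = 0"
  shows "mat_apply n M v = (\<lambda>i. 0)"
  using assms unfolding mat_apply_def mbounded_def
  by (auto simp: fun_eq_iff bounded_op_zero intro!: sum.neutral)

lemma mat_apply_cong:
  "(\<And>i. i < n \<Longrightarrow> v i = v' i) \<Longrightarrow> mat_apply n M v = mat_apply n M v'"
  unfolding mat_apply_def by (auto simp: fun_eq_iff)

lemma mat_apply_mcong:
  "(\<And>i j. i < n \<Longrightarrow> j < n \<Longrightarrow> M i j = M' i j) \<Longrightarrow> mat_apply n M = mat_apply n M'"
  unfolding mat_apply_def by (auto simp: fun_eq_iff)

lemma mat_apply_bounded:
  assumes "mbounded n M"
  shows "\<exists>K. \<forall>v. vnorm n (mat_apply n M v) \<le> K * vnorm n v"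
proof -
  have "\<forall>i<n. \<forall>j<n. \<exists>K. \<forall>x. norm (M i j x) \<le> K * norm x"
    using assms unfolding mbounded_def bounded_op_def by blast
  then obtain K where K: "\<And>i j x. i < n \<Longrightarrow> j < n \<Longrightarrow> norm (M i j x) \<le> K i j * norm x" by metis
  define L where "L = (\<Sum>i<n. \<Sum>j<n. \<bar>K i j\<bar>)"
  have "vnorm n (mat_apply n M v) \<le> L * vnorm n v" for v
  proof -
    have row: "norm (mat_apply n M v i) \<le> (\<Sum>j<n. \<bar>K i j\<bar>) * vnorm n v" if "i < n" for i
    proof -
      have "norm (mat_apply n M v i) \<le> (\<Sum>j<n. norm (M i j (v j)))"
        using that unfolding mat_apply_def by (simp add: norm_sum)
      also have "\<dots> \<le> (\<Sum>j<n. \<bar>K i j\<bar> * vnorm n v)"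
      proof (intro sum_mono)
        fix j assume j: "j \<in> {..<n}"
        have "norm (M i j (v j)) \<le> K i j * norm (v j)" using K that j by simp
        also have "\<dots> \<le> \<bar>K i j\<bar> * norm (v j)" by (intro mult_right_mono) auto
        also have "\<dots> \<le> \<bar>K i j\<bar> * vnorm n v"
          using j unfolding vnorm_L2 by (intro mult_left_mono member_le_L2_set) auto
        finally show "norm (M i j (v j)) \<le> \<bar>K i j\<bar> * vnorm n v" .
      qed
      finally show ?thesis by (simp add: sum_distrib_right)
    qed
    have "vnorm n (mat_apply n M v) \<le> (\<Sum>i<n. norm (mat_apply n M v i))"
      unfolding vnorm_L2 by (rule L2_set_le_sum) simp
    also have "\<dots> \<le> (\<Sum>i<n. (\<Sum>j<n. \<bar>K i j\<bar>) * vnorm n v)"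
      by (intro sum_mono row) auto
    finally show ?thesis by (simp add: L_def sum_distrib_right)
  qed
  then show ?thesis by blast
qed

lemma bdd_above_mnorm_set:
  assumes "mbounded n M"
  shows "bdd_above {vnorm n (mat_apply n M v) |v. vnorm n v \<le> 1}"
proof -
  obtain K where K: "\<And>v. vnorm n (mat_apply n M v) \<le> K * vnorm n v" using mat_apply_bounded[OF assms] by blast
  show ?thesis
  proof (rule bdd_aboveI[of _ "\<bar>K\<bar>"])
    fix r assume "r \<in> {vnorm n (mat_apply n M v) |v. vnorm n v \<le> 1}"
    then obtain v where r: "r = vnorm n (mat_apply n M v)" "vnorm n v \<le> 1" by blast
    have "vnorm n (mat_apply n M v) \<le> K * vnorm n v" by (rule K)
    also have "\<dots> \<le> \<bar>K\<bar> * vnorm n v" by (intro mult_right_mono) auto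
    also have "\<dots> \<le> \<bar>K\<bar> * 1" using r(2) by (intro mult_left_mono) auto
    finally show "r \<le> \<bar>K\<bar>" using r by simp
  qed
qed

lemma vnorm_mat_apply_le:
  assumes "mbounded n M"
  shows "vnorm n (mat_apply n M v) \<le> mnorm n M * vnorm n v"
proof (cases "vnorm n v = 0")
  case True
  then have "mat_apply n M v = (\<lambda>i. 0)" using mat_apply_zero[OF assms] vnorm_zero_imp by blast
  then show ?thesis using True by (simp add: vnorm_def)
next
  case False
  then have pos: "0 < vnorm n v" using vnorm_nonneg[of n v] by linarith
  define w where "w = (\<lambda>i. hscaleC (complex_of_real (1 / vnorm n v)) (v i))"
  have nw: "vnorm n w = 1" using pos by (simp add: w_def vnorm_scale norm_divide)
  have "vnorm n (mat_apply n M w) \<le> mnorm n M" unfolding mnorm_def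
    using nw bdd_above_mnorm_set[OF assms] by (intro cSup_upper) auto
  moreover have "vnorm n (mat_apply n M w) = vnorm n (mat_apply n M v) / vnorm n v"
    unfolding w_def mat_apply_scale[OF assms] vnorm_scale using pos by (simp add: norm_divide)
  ultimately show ?thesis using pos by (simp add: field_simps)
qed

lemma mnorm_leI:
  assumes "\<And>v. vnorm n v \<le> 1 \<Longrightarrow> vnorm n (mat_apply n M v) \<le> K"
  shows "mnorm n M \<le> K"
  unfolding mnorm_def using assms by (intro cSup_least) (auto intro!: exI[of _ "\<lambda>i. 0"] simp: vnorm_def)

lemma mnorm_nonneg:
  assumes "mbounded n M"
  shows "0 \<le> mnorm n M"
proof -
  have "vnorm n (mat_apply n M (\<lambda>i. 0)) \<le> mnorm n M" unfolding mnorm_def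
    using bdd_above_mnorm_set[OF assms] by (intro cSup_upper) (auto simp: vnorm_def)
  then show ?thesis by (metis order.trans vnorm_nonneg)
qed

lemma mnorm_mcong:
  "(\<And>i j. i < n \<Longrightarrow> j < n \<Longrightarrow> M i j = M' i j) \<Longrightarrow> mnorm n M = mnorm n M'"
  unfolding mnorm_def by (simp add: mat_apply_mcong[of n M M'])

lemma mpositive_mcong:
  "(\<And>i j. i < n \<Longrightarrow> j < n \<Longrightarrow> M i j = M' i j) \<Longrightarrow> mpositive n M \<Longrightarrow> mpositive n M'"
  unfolding mpositive_def by (simp add: mat_apply_mcong[of n M M'])

lemma mnorm_one_eq_opnorm: "mnorm (Suc 0) M = opnorm (M 0 0)"
proof -
  have "{vnorm (Suc 0) (mat_apply (Suc 0) M v) |v. vnorm (Suc 0) v \<le> 1} = {norm (M 0 0 x) |x. norm x \<le> 1}"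
  proof (intro set_eqI iffI)
    fix r assume "r \<in> {vnorm (Suc 0) (mat_apply (Suc 0) M v) |v. vnorm (Suc 0) v \<le> 1}"
    then obtain v where "r = vnorm (Suc 0) (mat_apply (Suc 0) M v)" "vnorm (Suc 0) v \<le> 1" by blast
    then show "r \<in> {norm (M 0 0 x) |x. norm x \<le> 1}"
      by (intro CollectI exI[of _ "v 0"]) (simp add: vnorm_def mat_apply_def)
  next
    fix r assume "r \<in> {norm (M 0 0 x) |x. norm x \<le> 1}"
    then obtain x where "r = norm (M 0 0 x)" "norm x \<le> 1" by blast
    then show "r \<in> {vnorm (Suc 0) (mat_apply (Suc 0) M v) |v. vnorm (Suc 0) v \<le> 1}"
      by (intro CollectI exI[of _ "\<lambda>i. x"]) (simp add: vnorm_def mat_apply_def)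
  qed
  then show ?thesis unfolding mnorm_def opnorm_def by simp
qed

lemma
  assumes "super_opsys \<epsilon> X"
  shows super_opsys_grading: "grading \<epsilon>"
    and super_opsys_bounded: "T \<in> X \<Longrightarrow> bounded_op T"
    and super_opsys_id: "id \<in> X"
    and super_opsys_zero: "(\<lambda>x. 0) \<in> X"
    and super_opsys_add: "S \<in> X \<Longrightarrow> T \<in> X \<Longrightarrow> (\<lambda>x. S x + T x) \<in> X"
    and super_opsys_scale: "T \<in> X \<Longrightarrow> (\<lambda>x. hscaleC a (T x)) \<in> X"
    and super_opsys_superadj: "T \<in> X \<Longrightarrow> superadj \<epsilon> T \<in> X"
  using assms unfolding super_opsys_def by blast+

lemma mbounded_if_mat_in: "super_opsys \<epsilon> X \<Longrightarrow> mat_in n X A \<Longrightarrow> mbounded n A"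
  unfolding mat_in_def mbounded_def using super_opsys_bounded by blast

lemma
  assumes "star_linear_map \<epsilon>X X \<epsilon>Y Y \<phi>"
  shows star_linear_map_in: "x \<in> X \<Longrightarrow> \<phi> x \<in> Y"
    and star_linear_map_add:
      "x \<in> X \<Longrightarrow> y \<in> X \<Longrightarrow> \<phi> (\<lambda>v. x v + y v) = (\<lambda>w. \<phi> x w + \<phi> y w)"
    and star_linear_map_scale: "x \<in> X \<Longrightarrow> \<phi> (\<lambda>v. hscaleC a (x v)) = (\<lambda>w. hscaleC a (\<phi> x w))"
    and star_linear_map_superadj: "x \<in> X \<Longrightarrow> \<phi> (superadj \<epsilon>X x) = superadj \<epsilon>Y (\<phi> x)"
  using assms unfolding star_linear_map_def by blast+

lemma star_linear_map_zero:
  assumes "super_opsys \<epsilon>X X" "star_linear_map \<epsilon>X X \<epsilon>Y Y \<phi>"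
  shows "\<phi> (\<lambda>v. 0) = (\<lambda>v. 0)"
  using star_linear_map_scale[OF assms(2) super_opsys_zero[OF assms(1)], of 0] by simp

lemma super_opsys_shift:
  assumes so: "super_opsys \<epsilon> X" and T: "T \<in> X"
  shows "(\<lambda>v. hscaleC d (id v) + hscaleC e (T v)) \<in> X"
  using super_opsys_add[OF so super_opsys_scale[OF so super_opsys_id[OF so]] super_opsys_scale[OF so T]]
  by simp

lemma star_linear_map_shift:
  assumes so: "super_opsys \<epsilon>X X" and sl: "star_linear_map \<epsilon>X X \<epsilon>Y Y \<phi>" and u: "unital_map \<phi>"
    and T: "T \<in> X"
  shows "\<phi> (\<lambda>v. hscaleC d (id v) + hscaleC e (T v)) = (\<lambda>v. hscaleC d (id v) + hscaleC e (\<phi> T v))"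
proof -
  have I: "(\<lambda>v. hscaleC d (id v)) \<in> X" by (rule super_opsys_scale[OF so super_opsys_id[OF so]])
  have S: "(\<lambda>v. hscaleC e (T v)) \<in> X" by (rule super_opsys_scale[OF so T])
  show ?thesis
    using star_linear_map_add[OF sl I S] star_linear_map_scale[OF sl super_opsys_id[OF so], of d]
      star_linear_map_scale[OF sl T, of e] u
    unfolding unital_map_def by simp
qed

section \<open>Superpositivity as a quadratic form condition\<close>

definition mquad :: "nat \<Rightarrow> ('a::hcinner) mat \<Rightarrow> (nat \<Rightarrow> 'a) \<Rightarrow> complex" where
  "mquad n M w = vinner n w (mat_apply n M w)"

lemma vinner_mat_apply:
  "vinner n u (mat_apply n M v) = (\<Sum>i<n. \<Sum>j<n. hcinner (u i) (M i j (v j)))"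
  unfolding vinner_def mat_apply_def by (simp add: hcinner_sum_right)

lemma hcinner_iota_op:
  assumes "grading \<epsilon>"
  shows "hcinner x (iota_op \<epsilon> T y) = (1 + \<i>) / 2 * hcinner x (T y) + (1 - \<i>) / 2 * hcinner (\<epsilon> x) (T (\<epsilon> y))"
  unfolding iota_op_def galpha_def
  apply (simp add: hcinner_add_right hcinner_scaleC_right hcinner_diff_right grading_hcinner[OF assms])
  apply (simp add: field_simps)
  done

lemma mquad_iota:
  assumes "grading \<epsilon>"
  shows "mquad n (\<lambda>i j. iota_op \<epsilon> (M i j)) w = (1 + \<i>) / 2 * mquad n M w + (1 - \<i>) / 2 * mquad n M (\<lambda>i. \<epsilon> (w i))"
  unfolding mquad_def vinner_mat_apply hcinner_iota_op[OF assms]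
  by (simp add: sum.distrib sum_distrib_left)

lemma mquad_grading_herm:
  fixes M :: "('a::{hcinner,banach}) mat"
  assumes g: "grading \<epsilon>" and b: "mbounded n M" and h: "mherm \<epsilon> n M"
  shows "mquad n M (\<lambda>i. \<epsilon> (w i)) = cnj (mquad n M w)"
proof -
  have "mquad n M (\<lambda>i. \<epsilon> (w i)) = (\<Sum>i<n. \<Sum>j<n. cnj (hcinner (w j) (M j i (w i))))"
    unfolding mquad_def vinner_mat_apply
  proof (intro sum.cong refl)
    fix i j assume i: "i \<in> {..<n}" and j: "j \<in> {..<n}"
    have e: "M i j = superadj \<epsilon> (M j i)" using h i j unfolding mherm_def by blast
    have "hcinner (\<epsilon> (w i)) (M i j (\<epsilon> (w j))) = hcinner (\<epsilon> (w i)) (superadj \<epsilon> (M j i) (\<epsilon> (w j)))"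
      by (subst e) (rule refl)
    also have "\<dots> = hcinner (\<epsilon> (M j i (w i))) (\<epsilon> (w j))"
      using b i j unfolding mbounded_def by (simp add: hcinner_superadj[OF g] grading_involution[OF g])
    also have "\<dots> = cnj (hcinner (w j) (M j i (w i)))"
      by (simp add: hcinner_grading_grading[OF g] hcinner_commute[of "M j i (w i)"])
    finally show "hcinner (\<epsilon> (w i)) (M i j (\<epsilon> (w j))) = cnj (hcinner (w j) (M j i (w i)))" .
  qed
  also have "\<dots> = cnj (\<Sum>i<n. \<Sum>j<n. hcinner (w j) (M j i (w i)))"
    by simp
  also have "\<dots> = cnj (\<Sum>j<n. \<Sum>i<n. hcinner (w j) (M j i (w i)))"
    by (subst sum.swap) (rule refl)
  finally show ?thesis unfolding mquad_def vinner_mat_apply .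
qed

lemma mquad_iota_herm:
  fixes M :: "('a::{hcinner,banach}) mat"
  assumes g: "grading \<epsilon>" and b: "mbounded n M" and h: "mherm \<epsilon> n M"
  shows "mquad n (\<lambda>i j. iota_op \<epsilon> (M i j)) w = complex_of_real (Re ((1 + \<i>) * mquad n M w))"
  unfolding mquad_iota[OF g] mquad_grading_herm[OF g b h] by (simp add: complex_eq_iff field_simps)

lemma mpositive_iota_iff:
  fixes M :: "('a::{hcinner,banach}) mat"
  assumes g: "grading \<epsilon>" and b: "mbounded n M" and h: "mherm \<epsilon> n M"
  shows "mpositive n (\<lambda>i j. iota_op \<epsilon> (M i j)) \<longleftrightarrow> (\<forall>w. 0 \<le> Re ((1 + \<i>) * mquad n M w))"
  unfolding mpositive_def mquad_iota_herm[OF g b h, unfolded mquad_def] by (simp add: mquad_def)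

definition shifted_mat :: "real \<Rightarrow> ('a::hcinner) mat \<Rightarrow> 'a mat" where
  "shifted_mat t M = (\<lambda>i j v. hscaleC (if i = j then complex_of_real t else 0) (id v) + hscaleC (-(1 + \<i>)) (M i j v))"

lemma mbounded_shifted_mat: "mbounded n M \<Longrightarrow> mbounded n (shifted_mat t M)"
  unfolding mbounded_def
proof (intro allI impI)
  fix i j assume "\<forall>i<n. \<forall>j<n. bounded_op (M i j)" "i < n" "j < n"
  then have "bounded_op (M i j)" by blast
  then show "bounded_op (shifted_mat t M i j)" unfolding shifted_mat_def by (rule bounded_op_comb[OF bounded_op_id])
qed

lemma mat_apply_shifted_mat:
  "i < n \<Longrightarrow> mat_apply n (shifted_mat t M) v i = hscaleC (complex_of_real t) (v i) + hscaleC (-(1 + \<i>)) (mat_apply n M v i)"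
proof -
  assume i: "i < n"
  have "mat_apply n (shifted_mat t M) v i = (\<Sum>j<n. (if i = j then hscaleC (complex_of_real t) (v j) else 0)) + (\<Sum>j<n. hscaleC (-(1 + \<i>)) (M i j (v j)))"
    using i unfolding mat_apply_def shifted_mat_def by (simp add: sum.distrib if_distrib[of "\<lambda>a. hscaleC a _"] cong: if_cong)
  also have "\<dots> = hscaleC (complex_of_real t) (v i) + hscaleC (-(1 + \<i>)) (mat_apply n M v i)"
    using i by (simp add: mat_apply_def hscaleC_sum)
  finally show ?thesis .
qed

lemma vnorm_sq_add_hscaleC:
  fixes v u :: "nat \<Rightarrow> 'a::hcinner"
  shows "(vnorm n (\<lambda>i. hscaleC (complex_of_real t) (v i) + hscaleC c (u i)))\<^sup>2
    = t\<^sup>2 * (vnorm n v)\<^sup>2 + 2 * t * Re (c * vinner n v u) + (cmod c)\<^sup>2 * (vnorm n u)\<^sup>2"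
proof -
  have "complex_of_real ((vnorm n (\<lambda>i. hscaleC (complex_of_real t) (v i) + hscaleC c (u i)))\<^sup>2)
     = complex_of_real t * complex_of_real t * vinner n v v + complex_of_real t * (c * vinner n v u)
       + complex_of_real t * cnj (c * vinner n v u) + cnj c * c * vinner n u u"
    unfolding vinner_self[symmetric] vinner_add_left vinner_add_right vinner_scale_left
      vinner_scale_right vinner_commute[of n u v]
    by (simp add: algebra_simps)
  also have "\<dots> = complex_of_real (t\<^sup>2 * (vnorm n v)\<^sup>2)
       + complex_of_real t * (c * vinner n v u + cnj (c * vinner n v u))
       + complex_of_real ((cmod c)\<^sup>2 * (vnorm n u)\<^sup>2)"
    unfolding vinner_self cnj_mult_self by (simp add: algebra_simps power2_eq_square)
  also have "\<dots> = complex_of_real (t\<^sup>2 * (vnorm n v)\<^sup>2 + 2 * t * Re (c * vinner n v u)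
       + (cmod c)\<^sup>2 * (vnorm n u)\<^sup>2)"
    by (simp only: complex_add_cnj of_real_add of_real_mult) (simp add: algebra_simps)
  finally show ?thesis
    by (simp only: of_real_eq_iff)
qed

lemma mnorm_shifted_mat_le:
  fixes A :: "('a::hcinner) mat"
  assumes bA: "mbounded n A" and pos: "\<And>v. 0 \<le> Re ((1 + \<i>) * mquad n A v)" and t: "0 \<le> t"
  shows "mnorm n (shifted_mat t A) \<le> sqrt (t\<^sup>2 + 2 * (mnorm n A)\<^sup>2)"
proof (rule mnorm_leI)
  fix v :: "nat \<Rightarrow> 'a" assume v1: "vnorm n v \<le> 1"
  define u where "u = mat_apply n A v"
  have "vnorm n u \<le> mnorm n A * vnorm n v"
    unfolding u_def by (rule vnorm_mat_apply_le[OF bA])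
  also have "\<dots> \<le> mnorm n A"
    using v1 mnorm_nonneg[OF bA] by (simp add: mult_left_le)
  finally have u: "(vnorm n u)\<^sup>2 \<le> (mnorm n A)\<^sup>2"
    by (simp add: power_mono)
  have "(vnorm n v)\<^sup>2 \<le> 1"
    using v1 by (simp add: power_le_one)
  then have v: "t\<^sup>2 * (vnorm n v)\<^sup>2 \<le> t\<^sup>2"
    by (simp add: mult_left_le)
  have "0 \<le> 2 * t * Re ((1 + \<i>) * mquad n A v)"
    using pos[of v] t by simp
  moreover have "(vnorm n (mat_apply n (shifted_mat t A) v))\<^sup>2
      = (vnorm n (\<lambda>i. hscaleC (complex_of_real t) (v i) + hscaleC (-(1 + \<i>)) (u i)))\<^sup>2"
    by (simp add: mat_apply_shifted_mat u_def cong: vnorm_cong)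
  moreover have "\<dots> = t\<^sup>2 * (vnorm n v)\<^sup>2 - 2 * t * Re ((1 + \<i>) * mquad n A v) + 2 * (vnorm n u)\<^sup>2"
    unfolding vnorm_sq_add_hscaleC by (simp add: mquad_def u_def cmod_power2 algebra_simps)
  ultimately have "(vnorm n (mat_apply n (shifted_mat t A) v))\<^sup>2 \<le> t\<^sup>2 + 2 * (mnorm n A)\<^sup>2"
    using u v by linarith
  then show "vnorm n (mat_apply n (shifted_mat t A) v) \<le> sqrt (t\<^sup>2 + 2 * (mnorm n A)\<^sup>2)"
    by (rule real_le_rsqrt)
qed

lemma vinner_shifted_mat:
  "vinner n w (mat_apply n (shifted_mat t B) w)
     = complex_of_real (t * (vnorm n w)\<^sup>2) - (1 + \<i>) * mquad n B w"
proof -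
  have "vinner n w (mat_apply n (shifted_mat t B) w)
      = vinner n w (\<lambda>i. hscaleC (complex_of_real t) (w i) + hscaleC (-(1 + \<i>)) (mat_apply n B w i))"
    by (rule vinner_cong) (auto simp: mat_apply_shifted_mat)
  then show ?thesis
    unfolding vinner_add_right vinner_scale_right vinner_self mquad_def by (simp add: algebra_simps)
qed

lemma cmod_of_real_diff_sq: "(cmod (complex_of_real a - z))\<^sup>2 = a\<^sup>2 - 2 * a * Re z + (cmod z)\<^sup>2"
  by (simp add: cmod_power2 power2_diff algebra_simps)

lemma nonneg_if_linear_le_quadratic:
  fixes r s M2 :: real
  assumes sp: "0 < s" and H: "\<And>t. 0 < t \<Longrightarrow> - 2 * t * s * r \<le> M2 * s\<^sup>2" and M: "0 \<le> M2"
  shows "0 \<le> r"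
proof (rule ccontr)
  assume "\<not> 0 \<le> r"
  define q where "q = - r"
  have q: "0 < q" "r = - q" using \<open>\<not> 0 \<le> r\<close> by (auto simp: q_def)
  define t where "t = M2 * s / q + 1"
  have "0 \<le> M2 * s / q" using q M sp by simp
  then have tp: "0 < t" by (simp add: t_def)
  have "- 2 * t * s * r \<le> M2 * s\<^sup>2" by (rule H[OF tp])
  then have "s * (2 * t * q) \<le> s * (M2 * s)" using q by (simp add: power2_eq_square mult_ac)
  then have le: "2 * t * q \<le> M2 * s" using sp by (rule mult_left_le_imp_le)
  have "t * q = M2 * s + q" unfolding t_def using q by (simp add: distrib_right)
  moreover have "0 \<le> M2 * s" using M sp by simp
  ultimately show False using le q by linarith
qed

lemma quad_nonneg_if_mnorm_shifted_mat_le: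
  fixes B :: "('a::hcinner) mat"
  assumes bB: "mbounded n B"
    and shifted: "\<And>t. 0 < t \<Longrightarrow> mnorm n (shifted_mat t B) \<le> sqrt (t\<^sup>2 + 2 * M\<^sup>2)"
  shows "0 \<le> Re ((1 + \<i>) * mquad n B w)"
proof (cases "vnorm n w = 0")
  case True
  then have "mat_apply n B w = (\<lambda>i. 0)" using mat_apply_zero[OF bB] vnorm_zero_imp by blast
  then show ?thesis by (simp add: mquad_def vinner_def)
next
  case False
  define s where "s = (vnorm n w)\<^sup>2"
  define z where "z = (1 + \<i>) * mquad n B w"
  have s: "0 < s" unfolding s_def using False vnorm_nonneg[of n w] by simp
  have "- 2 * t * s * Re z \<le> 2 * M\<^sup>2 * s\<^sup>2" if t: "0 < t" for t
  proof -
    let ?R = "sqrt (t\<^sup>2 + 2 * M\<^sup>2)"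
    have "vnorm n (mat_apply n (shifted_mat t B) w) \<le> mnorm n (shifted_mat t B) * vnorm n w"
      by (rule vnorm_mat_apply_le[OF mbounded_shifted_mat[OF bB]])
    also have "\<dots> \<le> ?R * vnorm n w"
      using shifted[OF t] by (rule mult_right_mono) simp
    finally have "cmod (complex_of_real (t * s) - z) \<le> vnorm n w * (?R * vnorm n w)"
      using vinner_CS[of n w "mat_apply n (shifted_mat t B) w"] mult_left_mono[of _ _ "vnorm n w"]
      unfolding vinner_shifted_mat s_def z_def by (smt (verit) vnorm_nonneg)
    then have "(cmod (complex_of_real (t * s) - z))\<^sup>2 \<le> (?R * s)\<^sup>2"
      unfolding s_def by (intro power_mono) (simp_all add: power2_eq_square mult_ac)
    moreover have "(?R * s)\<^sup>2 = (t * s)\<^sup>2 + 2 * M\<^sup>2 * s\<^sup>2"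
      by (simp add: power_mult_distrib algebra_simps)
    ultimately have "- 2 * (t * s) * Re z \<le> 2 * M\<^sup>2 * s\<^sup>2"
      using cmod_of_real_diff_sq[of "t * s" z] zero_le_power2[of "cmod z"] by linarith
    then show ?thesis
      by (simp add: mult.assoc)
  qed
  then show ?thesis
    unfolding z_def by (rule nonneg_if_linear_le_quadratic[OF s]) simp_all
qed

lemma mpositive_iota_if_shifts_contracted:
  fixes A :: "('a::{hcinner,banach}) mat" and B :: "('b::{hcinner,banach}) mat"
  assumes gX: "grading \<epsilon>X" and gY: "grading \<epsilon>Y"
    and bA: "mbounded n A" and bB: "mbounded n B"
    and hA: "mherm \<epsilon>X n A" and hB: "mherm \<epsilon>Y n B"
    and pA: "mpositive n (\<lambda>i j. iota_op \<epsilon>X (A i j))"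
    and contr: "\<And>t. 0 < t \<Longrightarrow> mnorm n (shifted_mat t B) \<le> mnorm n (shifted_mat t A)"
  shows "mpositive n (\<lambda>i j. iota_op \<epsilon>Y (B i j))"
proof -
  have "\<And>v. 0 \<le> Re ((1 + \<i>) * mquad n A v)"
    using pA mpositive_iota_iff[OF gX bA hA] by blast
  then have "mnorm n (shifted_mat t B) \<le> sqrt (t\<^sup>2 + 2 * (mnorm n A)\<^sup>2)" if "0 < t" for t
    using contr[OF that] mnorm_shifted_mat_le[OF bA, of t] that by fastforce
  then show ?thesis
    unfolding mpositive_iota_iff[OF gY bB hB] using quad_nonneg_if_mnorm_shifted_mat_le[OF bB] by blast
qed

section \<open>Unital contractive maps are superpositive\<close>

lemma mbounded_amp:
  assumes soY: "super_opsys \<epsilon>Y Y" and sl: "star_linear_map \<epsilon>X X \<epsilon>Y Y \<phi>" and A: "mat_in n X A"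
  shows "mbounded n (amp \<phi> A)"
  using A super_opsys_bounded[OF soY star_linear_map_in[OF sl]]
  unfolding mbounded_def amp_def mat_in_def by blast

lemma mherm_amp:
  assumes sl: "star_linear_map \<epsilon>X X \<epsilon>Y Y \<phi>" and A: "mat_in n X A" and h: "mherm \<epsilon>X n A"
  shows "mherm \<epsilon>Y n (amp \<phi> A)"
  using A h star_linear_map_superadj[OF sl] unfolding mherm_def amp_def mat_in_def by metis

lemma mat_in_shifted_mat:
  assumes so: "super_opsys \<epsilon> X" and A: "mat_in n X A"
  shows "mat_in n X (shifted_mat t A)"
  using A super_opsys_shift[OF so] unfolding mat_in_def shifted_mat_def by blast

lemma amp_shifted_mat:
  assumes so: "super_opsys \<epsilon>X X" and sl: "star_linear_map \<epsilon>X X \<epsilon>Y Y \<phi>" and u: "unital_map \<phi>"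
    and A: "mat_in n X A" and "i < n" "j < n"
  shows "amp \<phi> (shifted_mat t A) i j = shifted_mat t (amp \<phi> A) i j"
proof -
  have "A i j \<in> X" using A assms(5,6) unfolding mat_in_def by blast
  then show ?thesis
    unfolding shifted_mat_def amp_def by (rule star_linear_map_shift[OF so sl u])
qed

lemma superpos_amp_if_shifts_contracted:
  fixes \<epsilon>X :: "('h::{hcinner,banach}) op" and \<epsilon>Y :: "('k::{hcinner,banach}) op"
  assumes soX: "super_opsys \<epsilon>X X" and soY: "super_opsys \<epsilon>Y Y"
    and sl: "star_linear_map \<epsilon>X X \<epsilon>Y Y \<phi>" and u: "unital_map \<phi>"
    and A: "mat_in n X A" and sp: "superpos \<epsilon>X n A"
    and contr: "\<And>t. 0 < t \<Longrightarrow> mnorm n (amp \<phi> (shifted_mat t A)) \<le> mnorm n (shifted_mat t A)"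
  shows "superpos \<epsilon>Y n (amp \<phi> A)"
proof -
  have hA: "mherm \<epsilon>X n A" and pA: "mpositive n (\<lambda>i j. iota_op \<epsilon>X (A i j))"
    using sp unfolding superpos_def by auto
  have hB: "mherm \<epsilon>Y n (amp \<phi> A)" by (rule mherm_amp[OF sl A hA])
  have "mnorm n (shifted_mat t (amp \<phi> A)) \<le> mnorm n (shifted_mat t A)" if "0 < t" for t
    using contr[OF that] mnorm_mcong[OF amp_shifted_mat[OF soX sl u A]] by simp
  then have "mpositive n (\<lambda>i j. iota_op \<epsilon>Y (amp \<phi> A i j))"
    by (rule mpositive_iota_if_shifts_contracted[OF super_opsys_grading[OF soX]
          super_opsys_grading[OF soY] mbounded_if_mat_in[OF soX A] mbounded_amp[OF soY sl A] hA hB pA])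
  with hB show ?thesis unfolding superpos_def by simp
qed

lemma unital_contractive_superpositive:
  fixes \<epsilon>X :: "('h::{hcinner,banach}) op" and \<epsilon>Y :: "('k::{hcinner,banach}) op"
  assumes soX: "super_opsys \<epsilon>X X" and soY: "super_opsys \<epsilon>Y Y"
    and sl: "star_linear_map \<epsilon>X X \<epsilon>Y Y \<phi>" and u: "unital_map \<phi>" and c: "contractive_map X \<phi>"
  shows "superpositive_map \<epsilon>X X \<epsilon>Y \<phi>"
  unfolding superpositive_map_def
proof (intro ballI impI)
  fix x assume x: "x \<in> X" and sp: "superpos \<epsilon>X 1 (\<lambda>_ _. x)"
  have A: "mat_in (Suc 0) X (\<lambda>_ _. x)" using x unfolding mat_in_def by simp
  have "superpos \<epsilon>Y (Suc 0) (amp \<phi> (\<lambda>_ _. x))"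
  proof (rule superpos_amp_if_shifts_contracted[OF soX soY sl u A])
    show "superpos \<epsilon>X (Suc 0) (\<lambda>_ _. x)" using sp by simp
    fix t :: real assume "0 < t"
    have C: "shifted_mat t (\<lambda>_ _. x) 0 0 \<in> X" using mat_in_shifted_mat[OF soX A, of t] unfolding mat_in_def by simp
    have "mnorm (Suc 0) (amp \<phi> (shifted_mat t (\<lambda>_ _. x))) = opnorm (\<phi> (shifted_mat t (\<lambda>_ _. x) 0 0))"
      unfolding mnorm_one_eq_opnorm amp_def ..
    also have "\<dots> \<le> opnorm (shifted_mat t (\<lambda>_ _. x) 0 0)" using c C unfolding contractive_map_def by blast
    also have "\<dots> = mnorm (Suc 0) (shifted_mat t (\<lambda>_ _. x))" unfolding mnorm_one_eq_opnorm ..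
    finally show "mnorm (Suc 0) (amp \<phi> (shifted_mat t (\<lambda>_ _. x))) \<le> mnorm (Suc 0) (shifted_mat t (\<lambda>_ _. x))" .
  qed
  then show "superpos \<epsilon>Y 1 (\<lambda>_ _. \<phi> x)" unfolding amp_def by simp
qed

lemma unital_completely_contractive_completely_superpositive:
  fixes \<epsilon>X :: "('h::{hcinner,banach}) op" and \<epsilon>Y :: "('k::{hcinner,banach}) op"
  assumes soX: "super_opsys \<epsilon>X X" and soY: "super_opsys \<epsilon>Y Y"
    and sl: "star_linear_map \<epsilon>X X \<epsilon>Y Y \<phi>" and u: "unital_map \<phi>" and c: "completely_contractive_map X \<phi>"
  shows "completely_superpositive_map \<epsilon>X X \<epsilon>Y \<phi>"
  unfolding completely_superpositive_map_def
proof (intro allI impI)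
  fix n A assume H: "mat_in n X A \<and> superpos \<epsilon>X n A"
  show "superpos \<epsilon>Y n (amp \<phi> A)"
  proof (rule superpos_amp_if_shifts_contracted[OF soX soY sl u])
    show "mat_in n X A" "superpos \<epsilon>X n A" using H by auto
    fix t :: real
    show "mnorm n (amp \<phi> (shifted_mat t A)) \<le> mnorm n (shifted_mat t A)"
      using c mat_in_shifted_mat[OF soX, of n A t] H unfolding completely_contractive_map_def by blast
  qed
qed

section \<open>The superpositive dilation and the cb bound\<close>

lemma sum_lessThan_add:
  fixes m :: nat shows "(\<Sum>i<n + m. f i) = (\<Sum>i<n. f i) + (\<Sum>i<m. f (n + i))"
  by (induction m) (simp_all add: add.assoc)

definition vjoin :: "nat \<Rightarrow> (nat \<Rightarrow> 'a) \<Rightarrow> (nat \<Rightarrow> 'a) \<Rightarrow> nat \<Rightarrow> 'a" where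
  "vjoin n x y = (\<lambda>i. if i < n then x i else y (i - n))"

lemma vjoin_grading: "(\<lambda>i. \<epsilon> (vjoin n x y i)) = vjoin n (\<lambda>i. \<epsilon> (x i)) (\<lambda>i. \<epsilon> (y i))"
  by (auto simp: fun_eq_iff vjoin_def)

lemma mquad_vjoin:
  "mquad (n + n) M w = mquad (n + n) M (vjoin n w (\<lambda>i. w (n + i)))"
proof -
  have eq: "\<And>i. i < n + n \<Longrightarrow> w i = vjoin n w (\<lambda>i. w (n + i)) i" by (simp add: vjoin_def)
  show ?thesis unfolding mquad_def
    by (rule vinner_cong[OF eq]) (simp_all add: mat_apply_cong[OF eq])
qed

text \<open>The block matrix [[c P, N], [N*, c P]] on H^n \<oplus> H^n, with P repeated along the diagonal and
  N* the superadjoint; for P = 1 and c = 2 \<parallel>N\<parallel> it is superpositive.\<close>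

definition dilation_mat :: "('a::hcinner) op \<Rightarrow> nat \<Rightarrow> real \<Rightarrow> 'a op \<Rightarrow> 'a mat \<Rightarrow> 'a mat" where
  "dilation_mat \<epsilon> n c P N = (\<lambda>i j.
     if i < n \<longleftrightarrow> j < n then (if i = j then (\<lambda>v. hscaleC (complex_of_real c) (P v)) else (\<lambda>v. 0))
     else if i < n then N i (j - n) else superadj \<epsilon> (N j (i - n)))"

definition diag_quad :: "nat \<Rightarrow> ('a::hcinner) op \<Rightarrow> (nat \<Rightarrow> 'a) \<Rightarrow> complex" where
  "diag_quad n P x = (\<Sum>i<n. hcinner (x i) (P (x i)))"

lemma vinner_mat_apply_vjoin:
  "vinner (n + n) (vjoin n x y) (mat_apply (n + n) M (vjoin n x y))
     = (\<Sum>i<n. \<Sum>j<n. hcinner (x i) (M i j (x j))) + (\<Sum>i<n. \<Sum>j<n. hcinner (x i) (M i (n + j) (y j)))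
     + (\<Sum>i<n. \<Sum>j<n. hcinner (y i) (M (n + i) j (x j)))
     + (\<Sum>i<n. \<Sum>j<n. hcinner (y i) (M (n + i) (n + j) (y j)))"
  unfolding vinner_mat_apply by (simp add: sum_lessThan_add vjoin_def sum.distrib)

lemma sum_hcinner_scaled_diagonal:
  "(\<Sum>i<n. \<Sum>j<n. hcinner (x i) ((if i = j then (\<lambda>v. hscaleC c (P v)) else (\<lambda>v. 0)) (x j)))
     = c * diag_quad n P x"
proof -
  have "(\<Sum>j<n. hcinner (x i) ((if i = j then (\<lambda>v. hscaleC c (P v)) else (\<lambda>v. 0)) (x j)))
      = c * hcinner (x i) (P (x i))" if "i < n" for i
    using that by (simp add: if_distrib[of "\<lambda>f. hcinner _ (f _)"] hcinner_scaleC_right cong: if_cong)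
  then show ?thesis
    unfolding diag_quad_def by (simp add: sum_distrib_left)
qed

lemma vinner_dilation_mat:
  fixes N :: "('a::{hcinner,banach}) mat"
  assumes g: "grading \<epsilon>" and b: "mbounded n N"
  shows "vinner (n + n) (vjoin n x y) (mat_apply (n + n) (dilation_mat \<epsilon> n c P N) (vjoin n x y))
    = complex_of_real c * diag_quad n P x + complex_of_real c * diag_quad n P y
      + vinner n x (mat_apply n N y) + cnj (vinner n (\<lambda>i. \<epsilon> (x i)) (mat_apply n N (\<lambda>i. \<epsilon> (y i))))"
proof -
  let ?G = "dilation_mat \<epsilon> n c P N"
  have lower: "hcinner (y i) (?G (n + i) j (x j)) = cnj (hcinner (\<epsilon> (x j)) (N j i (\<epsilon> (y i))))"
    if "i < n" "j < n" for i j
  proof -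
    have "hcinner (y i) (?G (n + i) j (x j)) = hcinner (\<epsilon> (N j i (\<epsilon> (y i)))) (x j)"
      using that b unfolding mbounded_def by (simp add: dilation_mat_def hcinner_superadj[OF g])
    then show ?thesis
      by (simp add: hcinner_commute[of _ "x j"] grading_hcinner[OF g])
  qed
  have b21: "(\<Sum>i<n. \<Sum>j<n. hcinner (y i) (?G (n + i) j (x j)))
      = cnj (vinner n (\<lambda>i. \<epsilon> (x i)) (mat_apply n N (\<lambda>i. \<epsilon> (y i))))"
  proof -
    have "(\<Sum>i<n. \<Sum>j<n. hcinner (y i) (?G (n + i) j (x j)))
        = cnj (\<Sum>i<n. \<Sum>j<n. hcinner (\<epsilon> (x j)) (N j i (\<epsilon> (y i))))"
      by (simp add: lower)
    also have "\<dots> = cnj (\<Sum>j<n. \<Sum>i<n. hcinner (\<epsilon> (x j)) (N j i (\<epsilon> (y i))))"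
      by (subst sum.swap) (rule refl)
    finally show ?thesis
      unfolding vinner_mat_apply .
  qed
  have b11: "(\<Sum>i<n. \<Sum>j<n. hcinner (x i) (?G i j (x j))) = complex_of_real c * diag_quad n P x"
    unfolding sum_hcinner_scaled_diagonal[symmetric] by (intro sum.cong refl) (simp add: dilation_mat_def)
  have b22: "(\<Sum>i<n. \<Sum>j<n. hcinner (y i) (?G (n + i) (n + j) (y j))) = complex_of_real c * diag_quad n P y"
    unfolding sum_hcinner_scaled_diagonal[symmetric] by (intro sum.cong refl) (simp add: dilation_mat_def)
  have b12: "(\<Sum>i<n. \<Sum>j<n. hcinner (x i) (?G i (n + j) (y j))) = vinner n x (mat_apply n N y)"
    unfolding vinner_mat_apply by (intro sum.cong refl) (simp add: dilation_mat_def)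
  show ?thesis
    unfolding vinner_mat_apply_vjoin b11 b12 b21 b22 by (simp add: algebra_simps)
qed

text \<open>The action of \<iota>(N) = (1 + i)/2 N + (1 - i)/2 \<alpha>(N) on H^n, and the quadratic form of
  \<iota>(P) repeated along the diagonal.\<close>

definition iota_apply :: "('a::hcinner) op \<Rightarrow> nat \<Rightarrow> 'a mat \<Rightarrow> (nat \<Rightarrow> 'a) \<Rightarrow> nat \<Rightarrow> 'a" where
  "iota_apply \<epsilon> n N y = (\<lambda>i. hscaleC ((1 + \<i>) / 2) (mat_apply n N y i) + hscaleC ((1 - \<i>) / 2) (\<epsilon> (mat_apply n N (\<lambda>i. \<epsilon> (y i)) i)))"

definition iota_diag_quad :: "('a::hcinner) op \<Rightarrow> nat \<Rightarrow> 'a op \<Rightarrow> (nat \<Rightarrow> 'a) \<Rightarrow> complex" where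
  "iota_diag_quad \<epsilon> n P x = (1 + \<i>) / 2 * diag_quad n P x + (1 - \<i>) / 2 * diag_quad n P (\<lambda>i. \<epsilon> (x i))"

lemma grading_involution_vec: "grading \<epsilon> \<Longrightarrow> (\<lambda>i. \<epsilon> (\<epsilon> (x i))) = x"
  by (simp add: grading_involution)

lemma vinner_iota_apply:
  assumes g: "grading \<epsilon>"
  shows "vinner n x (iota_apply \<epsilon> n N y) = (1 + \<i>) / 2 * vinner n x (mat_apply n N y)
     + (1 - \<i>) / 2 * vinner n (\<lambda>i. \<epsilon> (x i)) (mat_apply n N (\<lambda>i. \<epsilon> (y i)))"
  unfolding iota_apply_def vinner_add_right vinner_scale_right vinner_grading[OF g] ..

lemma mquad_iota_dilation_mat:
  fixes N :: "('a::{hcinner,banach}) mat"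
  assumes g: "grading \<epsilon>" and b: "mbounded n N"
  shows "mquad (n + n) (\<lambda>i j. iota_op \<epsilon> (dilation_mat \<epsilon> n c P N i j)) (vjoin n x y)
    = complex_of_real c * (iota_diag_quad \<epsilon> n P x + iota_diag_quad \<epsilon> n P y) + (vinner n x (iota_apply \<epsilon> n N y) + cnj (vinner n x (iota_apply \<epsilon> n N y)))"
proof -
  define B1 where "B1 = vinner n x (mat_apply n N y)"
  define B2 where "B2 = vinner n (\<lambda>i. \<epsilon> (x i)) (mat_apply n N (\<lambda>i. \<epsilon> (y i)))"
  have Q1: "mquad (n + n) (dilation_mat \<epsilon> n c P N) (vjoin n x y) = complex_of_real c * diag_quad n P x + complex_of_real c * diag_quad n P y + B1 + cnj B2"
    unfolding mquad_def B1_def B2_def by (rule vinner_dilation_mat[OF g b])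
  have Q2: "mquad (n + n) (dilation_mat \<epsilon> n c P N) (\<lambda>i. \<epsilon> (vjoin n x y i)) = complex_of_real c * diag_quad n P (\<lambda>i. \<epsilon> (x i)) + complex_of_real c * diag_quad n P (\<lambda>i. \<epsilon> (y i)) + B2 + cnj B1"
    unfolding mquad_def B1_def B2_def vjoin_grading vinner_dilation_mat[OF g b] grading_involution_vec[OF g] ..
  have V: "vinner n x (iota_apply \<epsilon> n N y) = (1 + \<i>) / 2 * B1 + (1 - \<i>) / 2 * B2"
    unfolding vinner_iota_apply[OF g] B1_def B2_def ..
  have cV: "cnj (vinner n x (iota_apply \<epsilon> n N y)) = (1 - \<i>) / 2 * cnj B1 + (1 + \<i>) / 2 * cnj B2"
    unfolding V by (simp add: complex_eq_iff)
  show ?thesis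
    unfolding mquad_iota[OF g] Q1 Q2 cV unfolding V iota_diag_quad_def by (simp add: algebra_simps)
qed

lemma cmod_one_pm_i_half: "cmod ((1 + \<i>) / 2) \<le> 1" "cmod ((1 - \<i>) / 2) \<le> 1"
proof -
  have "cmod ((1 + \<i>) / 2) = cmod (1/2 + \<i>/2)" by (simp add: add_divide_distrib)
  also have "\<dots> \<le> cmod (1/2) + cmod (\<i>/2)" by (rule norm_triangle_ineq)
  finally show "cmod ((1 + \<i>) / 2) \<le> 1" by (simp add: norm_divide)
  have "cmod ((1 - \<i>) / 2) = cmod (1/2 + (- \<i>)/2)" by (simp add: diff_divide_distrib)
  also have "\<dots> \<le> cmod (1/2) + cmod ((-\<i>)/2)" by (rule norm_triangle_ineq)
  finally show "cmod ((1 - \<i>) / 2) \<le> 1" by (simp add: norm_divide)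
qed

lemma vnorm_comb_le:
  assumes g: "grading \<epsilon>" and "cmod a \<le> 1" "cmod b \<le> 1"
  shows "vnorm n (\<lambda>i. hscaleC a (f i) + hscaleC b (\<epsilon> (h i))) \<le> vnorm n f + vnorm n h"
proof -
  have "vnorm n (\<lambda>i. hscaleC a (f i) + hscaleC b (\<epsilon> (h i))) \<le> vnorm n (\<lambda>i. hscaleC a (f i)) + vnorm n (\<lambda>i. hscaleC b (\<epsilon> (h i)))"
    by (rule vnorm_add)
  also have "\<dots> = cmod a * vnorm n f + cmod b * vnorm n h"
    unfolding vnorm_scale vnorm_grading[OF g, of n h] ..
  also have "\<dots> \<le> 1 * vnorm n f + 1 * vnorm n h"
    using assms by (intro add_mono mult_right_mono) auto
  finally show ?thesis by simp
qed

lemma vnorm_iota_apply_le: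
  assumes g: "grading \<epsilon>" and K: "\<And>v. vnorm n (mat_apply n N v) \<le> K * vnorm n v"
  shows "vnorm n (iota_apply \<epsilon> n N y) \<le> 2 * K * vnorm n y"
proof -
  have "vnorm n (iota_apply \<epsilon> n N y) \<le> vnorm n (mat_apply n N y) + vnorm n (mat_apply n N (\<lambda>i. \<epsilon> (y i)))"
    unfolding iota_apply_def by (rule vnorm_comb_le[OF g cmod_one_pm_i_half])
  also have "\<dots> \<le> K * vnorm n y + K * vnorm n (\<lambda>i. \<epsilon> (y i))" by (intro add_mono K)
  finally show ?thesis unfolding vnorm_grading[OF g] by simp
qed

lemma hscaleC_recombine:
  fixes p q :: "'a::hcinner"
  shows "hscaleC ((1 - \<i>) / 2) (hscaleC ((1 + \<i>) / 2) p + hscaleC ((1 - \<i>) / 2) q)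
       + hscaleC ((1 + \<i>) / 2) (hscaleC ((1 + \<i>) / 2) q + hscaleC ((1 - \<i>) / 2) p) = p"
proof -
  have "hscaleC ((1 - \<i>) / 2) (hscaleC ((1 + \<i>) / 2) p + hscaleC ((1 - \<i>) / 2) q)
       + hscaleC ((1 + \<i>) / 2) (hscaleC ((1 + \<i>) / 2) q + hscaleC ((1 - \<i>) / 2) p)
     = (hscaleC ((1 - \<i>) / 2 * ((1 + \<i>) / 2)) p + hscaleC ((1 + \<i>) / 2 * ((1 - \<i>) / 2)) p)
       + (hscaleC ((1 - \<i>) / 2 * ((1 - \<i>) / 2)) q + hscaleC ((1 + \<i>) / 2 * ((1 + \<i>) / 2)) q)"
    by (simp add: hscaleC_add_right hscaleC_hscaleC algebra_simps)
  also have "\<dots> = hscaleC ((1 - \<i>) / 2 * ((1 + \<i>) / 2) + (1 + \<i>) / 2 * ((1 - \<i>) / 2)) p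
       + hscaleC ((1 - \<i>) / 2 * ((1 - \<i>) / 2) + (1 + \<i>) / 2 * ((1 + \<i>) / 2)) q"
    by (simp only: hscaleC_add_left)
  also have "(1 - \<i>) / 2 * ((1 + \<i>) / 2) + (1 + \<i>) / 2 * ((1 - \<i>) / 2) = 1"
    by (simp add: complex_eq_iff)
  also have "(1 - \<i>) / 2 * ((1 - \<i>) / 2) + (1 + \<i>) / 2 * ((1 + \<i>) / 2) = 0"
    by (simp add: complex_eq_iff)
  finally show ?thesis by (simp add: hscaleC_one)
qed

lemma mat_apply_from_iota_apply:
  assumes g: "grading \<epsilon>" and i: "i < n"
  shows "mat_apply n N v i = hscaleC ((1 - \<i>) / 2) (iota_apply \<epsilon> n N v i) + hscaleC ((1 + \<i>) / 2) (\<epsilon> (iota_apply \<epsilon> n N (\<lambda>i. \<epsilon> (v i)) i))"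
proof -
  have "\<epsilon> (iota_apply \<epsilon> n N (\<lambda>i. \<epsilon> (v i)) i) = hscaleC ((1 + \<i>) / 2) (\<epsilon> (mat_apply n N (\<lambda>i. \<epsilon> (v i)) i)) + hscaleC ((1 - \<i>) / 2) (mat_apply n N v i)"
    unfolding iota_apply_def grading_involution_vec[OF g] by (simp add: grading_add[OF g] grading_hscaleC[OF g] grading_involution[OF g])
  then show ?thesis unfolding iota_apply_def by (simp only: hscaleC_recombine)
qed

lemma vnorm_mat_apply_le_iota_apply:
  assumes g: "grading \<epsilon>" and K: "\<And>v. vnorm n (iota_apply \<epsilon> n N v) \<le> K * vnorm n v"
  shows "vnorm n (mat_apply n N v) \<le> 2 * K * vnorm n v"
proof -
  have "vnorm n (mat_apply n N v) = vnorm n (\<lambda>i. hscaleC ((1 - \<i>) / 2) (iota_apply \<epsilon> n N v i) + hscaleC ((1 + \<i>) / 2) (\<epsilon> (iota_apply \<epsilon> n N (\<lambda>i. \<epsilon> (v i)) i)))"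
    by (rule vnorm_cong) (rule mat_apply_from_iota_apply[OF g])
  also have "\<dots> \<le> vnorm n (iota_apply \<epsilon> n N v) + vnorm n (iota_apply \<epsilon> n N (\<lambda>i. \<epsilon> (v i)))"
    by (rule vnorm_comb_le[OF g cmod_one_pm_i_half(2) cmod_one_pm_i_half(1)])
  also have "\<dots> \<le> K * vnorm n v + K * vnorm n (\<lambda>i. \<epsilon> (v i))" by (intro add_mono K)
  finally show ?thesis unfolding vnorm_grading[OF g] by simp
qed

lemma diag_quad_id: "diag_quad n id z = complex_of_real ((vnorm n z)\<^sup>2)"
  unfolding diag_quad_def vinner_self[symmetric] vinner_def by simp

lemma iota_diag_quad_id: "grading \<epsilon> \<Longrightarrow> iota_diag_quad \<epsilon> n id z = complex_of_real ((vnorm n z)\<^sup>2)"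
  unfolding iota_diag_quad_def diag_quad_id vnorm_grading by (simp add: complex_eq_iff)

lemma cmod_diag_quad_le:
  assumes "bounded_op P"
  shows "cmod (diag_quad n P z) \<le> opnorm P * (vnorm n z)\<^sup>2"
proof -
  have "cmod (diag_quad n P z) \<le> (\<Sum>i<n. cmod (hcinner (z i) (P (z i))))"
    unfolding diag_quad_def by (rule norm_sum)
  also have "\<dots> \<le> (\<Sum>i<n. opnorm P * (norm (z i))\<^sup>2)"
  proof (rule sum_mono)
    fix i
    have "cmod (hcinner (z i) (P (z i))) \<le> norm (z i) * norm (P (z i))"
      by (rule hcinner_cauchy_schwarz)
    also have "\<dots> \<le> norm (z i) * (opnorm P * norm (z i))"
      by (intro mult_left_mono norm_le_opnorm[OF assms]) simp
    finally show "cmod (hcinner (z i) (P (z i))) \<le> opnorm P * (norm (z i))\<^sup>2"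
      by (simp add: power2_eq_square mult_ac)
  qed
  also have "\<dots> = opnorm P * (vnorm n z)\<^sup>2"
    unfolding vnorm_sq by (simp add: sum_distrib_left)
  finally show ?thesis .
qed

lemma iota_diag_quad_le:
  assumes g: "grading \<epsilon>" and b: "bounded_op P"
  shows "Re (iota_diag_quad \<epsilon> n P x) \<le> 2 * opnorm P * (vnorm n x)\<^sup>2"
proof -
  have "Re (iota_diag_quad \<epsilon> n P x)
      \<le> cmod ((1 + \<i>) / 2 * diag_quad n P x) + cmod ((1 - \<i>) / 2 * diag_quad n P (\<lambda>i. \<epsilon> (x i)))"
    unfolding iota_diag_quad_def using complex_Re_le_cmod norm_triangle_ineq by (rule order.trans)
  also have "\<dots> \<le> cmod (diag_quad n P x) + cmod (diag_quad n P (\<lambda>i. \<epsilon> (x i)))"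
    unfolding norm_mult using cmod_one_pm_i_half
    by (intro add_mono mult_left_le_one_le) auto
  also have "\<dots> \<le> opnorm P * (vnorm n x)\<^sup>2 + opnorm P * (vnorm n (\<lambda>i. \<epsilon> (x i)))\<^sup>2"
    by (intro add_mono cmod_diag_quad_le[OF b])
  finally show ?thesis unfolding vnorm_grading[OF g] by simp
qed

lemma mpositive_iota_dilation_mat:
  fixes A :: "('a::{hcinner,banach}) mat"
  assumes g: "grading \<epsilon>" and bA: "mbounded n A"
  shows "mpositive (n + n) (\<lambda>i j. iota_op \<epsilon> (dilation_mat \<epsilon> n (2 * mnorm n A) id A i j))"
  unfolding mpositive_def
proof
  fix w :: "nat \<Rightarrow> 'a"
  define x where "x = w"
  define y where "y = (\<lambda>i. w (n + i))"
  define M where "M = mnorm n A"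
  have M0: "0 \<le> M" unfolding M_def by (rule mnorm_nonneg[OF bA])
  define V where "V = vinner n x (iota_apply \<epsilon> n A y)"
  have "vinner (n + n) w (mat_apply (n + n) (\<lambda>i j. iota_op \<epsilon> (dilation_mat \<epsilon> n (2 * M) id A i j)) w)
     = mquad (n + n) (\<lambda>i j. iota_op \<epsilon> (dilation_mat \<epsilon> n (2 * M) id A i j)) (vjoin n x y)"
    unfolding x_def y_def mquad_def[symmetric] by (rule mquad_vjoin)
  also have "\<dots> = complex_of_real (2 * M) * (iota_diag_quad \<epsilon> n id x + iota_diag_quad \<epsilon> n id y) + (V + cnj V)"
    unfolding V_def by (rule mquad_iota_dilation_mat[OF g bA])
  also have "\<dots> = complex_of_real (2 * M * ((vnorm n x)\<^sup>2 + (vnorm n y)\<^sup>2) + 2 * Re V)"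
    unfolding iota_diag_quad_id[OF g] complex_add_cnj by simp
  finally have eq: "vinner (n + n) w (mat_apply (n + n) (\<lambda>i j. iota_op \<epsilon> (dilation_mat \<epsilon> n (2 * M) id A i j)) w)
     = complex_of_real (2 * M * ((vnorm n x)\<^sup>2 + (vnorm n y)\<^sup>2) + 2 * Re V)" .
  have "\<bar>Re V\<bar> \<le> cmod V" by (rule abs_Re_le_cmod)
  also have "\<dots> \<le> vnorm n x * vnorm n (iota_apply \<epsilon> n A y)" unfolding V_def by (rule vinner_CS)
  also have "\<dots> \<le> vnorm n x * (2 * M * vnorm n y)"
    by (intro mult_left_mono vnorm_iota_apply_le[OF g]) (auto simp: M_def vnorm_mat_apply_le[OF bA])
  finally have RV: "\<bar>Re V\<bar> \<le> 2 * M * (vnorm n x * vnorm n y)" by (simp add: mult_ac)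
  have "0 \<le> 2 * M * ((vnorm n x - vnorm n y)\<^sup>2)" using M0 by simp
  then have "0 \<le> 2 * M * ((vnorm n x)\<^sup>2 + (vnorm n y)\<^sup>2) + 2 * Re V"
    using RV by (simp add: power2_diff algebra_simps)
  then show "vinner (n + n) w (mat_apply (n + n) (\<lambda>i j. iota_op \<epsilon> (dilation_mat \<epsilon> n (2 * mnorm n A) id A i j)) w) \<in> \<real> \<and>
        0 \<le> Re (vinner (n + n) w (mat_apply (n + n) (\<lambda>i j. iota_op \<epsilon> (dilation_mat \<epsilon> n (2 * mnorm n A) id A i j)) w))"
    using eq unfolding M_def by simp
qed

lemma le_if_quadratic_nonneg:
  fixes K a b :: real
  assumes a0: "0 \<le> a" and b0: "0 \<le> b" and K0: "0 \<le> K"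
    and H: "\<And>\<alpha>. 0 \<le> \<alpha> \<Longrightarrow> 0 \<le> K * \<alpha>\<^sup>2 * a\<^sup>2 + K * b\<^sup>2 - 2 * \<alpha> * a\<^sup>2"
  shows "a \<le> K * b"
proof (cases "a = 0")
  case True then show ?thesis using K0 b0 by simp
next
  case False
  then have ap: "0 < a" using a0 by simp
  show ?thesis
  proof (cases "K = 0")
    case True
    have "0 \<le> K * 1\<^sup>2 * a\<^sup>2 + K * b\<^sup>2 - 2 * 1 * a\<^sup>2" by (rule H) simp
    then have "0 \<le> - 2 * a\<^sup>2" using True by simp
    then have "a * a \<le> 0" by (simp add: power2_eq_square)
    moreover have "0 < a * a" using ap by simp
    ultimately show ?thesis by linarith
  next
    case False
    then have Kp: "0 < K" using K0 by simp
    show ?thesis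
    proof (cases "b = 0")
      case True
      have "0 \<le> K * (1/K)\<^sup>2 * a\<^sup>2 + K * b\<^sup>2 - 2 * (1/K) * a\<^sup>2" by (rule H) (simp add: Kp less_imp_le)
      also have "\<dots> = - (a\<^sup>2 / K)" using True Kp by (simp add: power2_eq_square field_simps)
      finally have "a\<^sup>2 / K \<le> 0" by simp
      moreover have "0 < a\<^sup>2 / K" using ap Kp by simp
      ultimately show ?thesis by simp
    next
      case False
      then have bp: "0 < b" using b0 by simp
      have "0 \<le> K * (b/a)\<^sup>2 * a\<^sup>2 + K * b\<^sup>2 - 2 * (b/a) * a\<^sup>2" by (rule H) (simp add: a0 b0)
      also have "\<dots> = 2 * b * (K * b - a)" using ap by (simp add: power2_eq_square field_simps)
      finally have "0 \<le> 2 * b * (K * b - a)" .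
      then have "0 \<le> K * b - a" using bp by (simp add: zero_le_mult_iff)
      then show ?thesis by simp
    qed
  qed
qed

lemma mnorm_le_if_dilation_superpositive:
  fixes N :: "('a::{hcinner,banach}) mat"
  assumes g: "grading \<epsilon>" and bN: "mbounded n N" and c0: "0 \<le> c" and p0: "0 \<le> p"
    and pos: "\<And>x y. 0 \<le> Re (mquad (n + n) (\<lambda>i j. iota_op \<epsilon> (dilation_mat \<epsilon> n c P N i j)) (vjoin n x y))"
    and pb: "\<And>x. Re (iota_diag_quad \<epsilon> n P x) \<le> p * (vnorm n x)\<^sup>2"
  shows "mnorm n N \<le> 2 * (c * p)"
proof -
  \<comment> \<open>test positivity against the vector (-\<alpha> \<iota>(N) v, v) and optimise over \<alpha>\<close>
  have U: "vnorm n (iota_apply \<epsilon> n N v) \<le> (c * p) * vnorm n v" for v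
  proof (rule le_if_quadratic_nonneg)
    show "0 \<le> c * p" using c0 p0 by simp
    fix \<alpha> :: real assume a0: "0 \<le> \<alpha>"
    define u where "u = iota_apply \<epsilon> n N v"
    define x where "x = (\<lambda>i. hscaleC (complex_of_real (- \<alpha>)) (u i))"
    have V: "vinner n x (iota_apply \<epsilon> n N v) = complex_of_real (- \<alpha> * (vnorm n u)\<^sup>2)"
      unfolding x_def u_def[symmetric] vinner_scale_left vinner_self by simp
    have nx: "vnorm n x = \<alpha> * vnorm n u" unfolding x_def vnorm_scale using a0 by simp
    have "0 \<le> Re (mquad (n + n) (\<lambda>i j. iota_op \<epsilon> (dilation_mat \<epsilon> n c P N i j)) (vjoin n x v))" by (rule pos)
    also have "\<dots> = c * (Re (iota_diag_quad \<epsilon> n P x) + Re (iota_diag_quad \<epsilon> n P v)) - 2 * \<alpha> * (vnorm n u)\<^sup>2"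
      unfolding mquad_iota_dilation_mat[OF g bN] V by simp
    also have "\<dots> \<le> c * (p * (\<alpha> * vnorm n u)\<^sup>2 + p * (vnorm n v)\<^sup>2) - 2 * \<alpha> * (vnorm n u)\<^sup>2"
      using pb[of x] pb[of v] c0 unfolding nx by (intro diff_right_mono mult_left_mono add_mono) auto
    also have "\<dots> = (c * p) * \<alpha>\<^sup>2 * (vnorm n u)\<^sup>2 + (c * p) * (vnorm n v)\<^sup>2 - 2 * \<alpha> * (vnorm n u)\<^sup>2"
      by (simp add: power_mult_distrib algebra_simps)
    finally show "0 \<le> (c * p) * \<alpha>\<^sup>2 * (vnorm n (iota_apply \<epsilon> n N v))\<^sup>2 + (c * p) * (vnorm n v)\<^sup>2 - 2 * \<alpha> * (vnorm n (iota_apply \<epsilon> n N v))\<^sup>2"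
      unfolding u_def .
  qed simp_all
  show ?thesis
  proof (rule mnorm_leI)
    fix v :: "nat \<Rightarrow> 'a" assume v1: "vnorm n v \<le> 1"
    have "vnorm n (mat_apply n N v) \<le> 2 * (c * p) * vnorm n v" by (rule vnorm_mat_apply_le_iota_apply[OF g U])
    also have "\<dots> \<le> 2 * (c * p) * 1" using v1 c0 p0 by (intro mult_left_mono) auto
    finally show "vnorm n (mat_apply n N v) \<le> 2 * (c * p)" by simp
  qed
qed

lemma mat_in_dilation_mat:
  assumes so: "super_opsys \<epsilon> X" and A: "mat_in n X A"
  shows "mat_in (n + n) X (dilation_mat \<epsilon> n c id A)"
proof -
  have Ain: "\<And>i j. i < n \<Longrightarrow> j < n \<Longrightarrow> A i j \<in> X" using A unfolding mat_in_def by blast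
  have D: "(\<lambda>v. hscaleC (complex_of_real c) (id v)) \<in> X" by (rule super_opsys_scale[OF so super_opsys_id[OF so]])
  have Z: "(\<lambda>v. 0) \<in> X" by (rule super_opsys_zero[OF so])
  show ?thesis unfolding mat_in_def dilation_mat_def
    using D Z Ain super_opsys_superadj[OF so Ain] by auto
qed

lemma mherm_dilation_mat:
  fixes A :: "('a::{hcinner,banach}) mat"
  assumes so: "super_opsys \<epsilon> X" and A: "mat_in n X A"
  shows "mherm \<epsilon> (n + n) (dilation_mat \<epsilon> n c id A)"
  unfolding mherm_def
proof (intro allI impI)
  fix i j assume i: "i < n + n" and j: "j < n + n"
  have g: "grading \<epsilon>" by (rule super_opsys_grading[OF so])
  show "dilation_mat \<epsilon> n c id A i j = superadj \<epsilon> (dilation_mat \<epsilon> n c id A j i)"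
  proof (cases "i < n \<longleftrightarrow> j < n")
    case True
    then show ?thesis
      by (auto simp: dilation_mat_def superadj_scaled_id[OF g, simplified] superadj_zero[OF g])
  next
    case False
    moreover have "superadj \<epsilon> (superadj \<epsilon> (A i (j - n))) = A i (j - n)" if "i < n" "\<not> j < n"
      using that j A unfolding mat_in_def
      by (intro superadj_superadj[OF g] super_opsys_bounded[OF so]) simp
    ultimately show ?thesis
      by (auto simp: dilation_mat_def)
  qed
qed

lemma superpos_dilation_mat:
  fixes A :: "('a::{hcinner,banach}) mat"
  assumes so: "super_opsys \<epsilon> X" and A: "mat_in n X A"
  shows "superpos \<epsilon> (n + n) (dilation_mat \<epsilon> n (2 * mnorm n A) id A)"
  unfolding superpos_def
  using mherm_dilation_mat[OF so A]
    mpositive_iota_dilation_mat[OF super_opsys_grading[OF so] mbounded_if_mat_in[OF so A]]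
  by blast

lemma amp_dilation_mat:
  fixes \<epsilon>X :: "('h::{hcinner,banach}) op" and \<epsilon>Y :: "('k::{hcinner,banach}) op"
  assumes soX: "super_opsys \<epsilon>X X" and sl: "star_linear_map \<epsilon>X X \<epsilon>Y Y \<psi>" and A: "mat_in n X A"
    and i: "i < n + n" and j: "j < n + n"
  shows "amp \<psi> (dilation_mat \<epsilon>X n c id A) i j = dilation_mat \<epsilon>Y n c (\<psi> id) (amp \<psi> A) i j"
proof -
  have Ain: "\<And>i j. i < n \<Longrightarrow> j < n \<Longrightarrow> A i j \<in> X" using A unfolding mat_in_def by blast
  have D: "\<psi> (\<lambda>v. hscaleC (complex_of_real c) (id v)) = (\<lambda>v. hscaleC (complex_of_real c) (\<psi> id v))"
    by (rule star_linear_map_scale[OF sl super_opsys_id[OF soX]])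
  have Z: "\<psi> (\<lambda>v. 0) = (\<lambda>v. 0)" by (rule star_linear_map_zero[OF soX sl])
  show ?thesis
  proof (cases "i < n")
    case True
    then show ?thesis using D Z unfolding dilation_mat_def amp_def by auto
  next
    case False
    then have "i - n < n" using i by simp
    then show ?thesis using False D Z star_linear_map_superadj[OF sl Ain] unfolding dilation_mat_def amp_def by auto
  qed
qed

lemma completely_superpositive_mnorm_amp_le:
  fixes \<epsilon>X :: "('h::{hcinner,banach}) op" and \<epsilon>Y :: "('k::{hcinner,banach}) op"
  assumes soX: "super_opsys \<epsilon>X X" and soY: "super_opsys \<epsilon>Y Y"
    and sl: "star_linear_map \<epsilon>X X \<epsilon>Y Y \<psi>" and csp: "completely_superpositive_map \<epsilon>X X \<epsilon>Y \<psi>"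
    and A: "mat_in n X A"
    and p: "\<And>x. Re (iota_diag_quad \<epsilon>Y n (\<psi> id) x) \<le> p * (vnorm n x)\<^sup>2" and p0: "0 \<le> p"
  shows "mnorm n (amp \<psi> A) \<le> 4 * p * mnorm n A"
proof -
  let ?c = "2 * mnorm n A"
  have "superpos \<epsilon>Y (n + n) (amp \<psi> (dilation_mat \<epsilon>X n ?c id A))"
    using csp mat_in_dilation_mat[OF soX A] superpos_dilation_mat[OF soX A]
    unfolding completely_superpositive_map_def by blast
  then have "mpositive (n + n) (\<lambda>i j. iota_op \<epsilon>Y (amp \<psi> (dilation_mat \<epsilon>X n ?c id A) i j))"
    unfolding superpos_def by blast
  then have "mpositive (n + n) (\<lambda>i j. iota_op \<epsilon>Y (dilation_mat \<epsilon>Y n ?c (\<psi> id) (amp \<psi> A) i j))"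
    by (rule mpositive_mcong[rotated]) (simp add: amp_dilation_mat[OF soX sl A])
  then have "mnorm n (amp \<psi> A) \<le> 2 * (?c * p)"
    unfolding mpositive_def mquad_def[symmetric]
    using mnorm_nonneg[OF mbounded_if_mat_in[OF soX A]] p0 p
    by (intro mnorm_le_if_dilation_superpositive[OF super_opsys_grading[OF soY]
          mbounded_amp[OF soY sl A]]) auto
  then show ?thesis by (simp add: mult_ac)
qed

theorem proposition3:
  fixes \<epsilon>X :: "('h::{hcinner,banach}) op" and X :: "'h op set"
    and \<epsilon>Y :: "('k::{hcinner,banach}) op" and Y :: "'k op set"
  assumes "super_opsys \<epsilon>X X" and "super_opsys \<epsilon>Y Y"
  shows "(\<forall>\<phi>. star_linear_map \<epsilon>X X \<epsilon>Y Y \<phi> \<and> unital_map \<phi> \<and> contractive_map X \<phi>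
              \<longrightarrow> superpositive_map \<epsilon>X X \<epsilon>Y \<phi>)
       \<and> (\<forall>\<phi>. star_linear_map \<epsilon>X X \<epsilon>Y Y \<phi> \<and> unital_map \<phi> \<and> completely_contractive_map X \<phi>
              \<longrightarrow> completely_superpositive_map \<epsilon>X X \<epsilon>Y \<phi>)
       \<and> (\<forall>\<psi>. star_linear_map \<epsilon>X X \<epsilon>Y Y \<psi> \<and> completely_superpositive_map \<epsilon>X X \<epsilon>Y \<psi>
              \<longrightarrow> (\<forall>n A. mat_in n X A \<longrightarrow> mnorm n (amp \<psi> A) \<le> 8 * opnorm (\<psi> id) * mnorm n A))
       \<and> (\<forall>\<psi>. star_linear_map \<epsilon>X X \<epsilon>Y Y \<psi> \<and> completely_superpositive_map \<epsilon>X X \<epsilon>Y \<psi> \<and> unital_map \<psi>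
              \<longrightarrow> (\<forall>n A. mat_in n X A \<longrightarrow> mnorm n (amp \<psi> A) \<le> 4 * mnorm n A))"
proof (intro conjI allI impI; (elim conjE)?)
  have gY: "grading \<epsilon>Y" by (rule super_opsys_grading[OF assms(2)])
  show "superpositive_map \<epsilon>X X \<epsilon>Y \<phi>"
    if "star_linear_map \<epsilon>X X \<epsilon>Y Y \<phi>" "unital_map \<phi>" "contractive_map X \<phi>" for \<phi>
    using unital_contractive_superpositive[OF assms that] .
  show "completely_superpositive_map \<epsilon>X X \<epsilon>Y \<phi>"
    if "star_linear_map \<epsilon>X X \<epsilon>Y Y \<phi>" "unital_map \<phi>" "completely_contractive_map X \<phi>" for \<phi>
    using unital_completely_contractive_completely_superpositive[OF assms that] .
  show "mnorm n (amp \<psi> A) \<le> 8 * opnorm (\<psi> id) * mnorm n A"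
    if \<psi>: "star_linear_map \<epsilon>X X \<epsilon>Y Y \<psi>" "completely_superpositive_map \<epsilon>X X \<epsilon>Y \<psi>"
      and A: "mat_in n X A" for \<psi> n A
  proof -
    have b: "bounded_op (\<psi> id)"
      using super_opsys_bounded[OF assms(2) star_linear_map_in[OF \<psi>(1) super_opsys_id[OF assms(1)]]] .
    have "mnorm n (amp \<psi> A) \<le> 4 * (2 * opnorm (\<psi> id)) * mnorm n A"
      by (rule completely_superpositive_mnorm_amp_le[OF assms \<psi> A iota_diag_quad_le[OF gY b]])
        (use opnorm_nonneg[OF b] in linarith)
    then show ?thesis by simp
  qed
  show "mnorm n (amp \<psi> A) \<le> 4 * mnorm n A"
    if \<psi>: "star_linear_map \<epsilon>X X \<epsilon>Y Y \<psi>" "completely_superpositive_map \<epsilon>X X \<epsilon>Y \<psi>" "unital_map \<psi>"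
      and A: "mat_in n X A" for \<psi> n A
    using completely_superpositive_mnorm_amp_le[OF assms \<psi>(1,2) A, of 1] \<psi>(3)
    by (simp add: unital_map_def iota_diag_quad_id[OF gY])
qed

end
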